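(* Let $\mathfrak G_{\mathcal J}=\{a\in\mathfrak G: [a,\mathcal J]\subset\mathcal J\}$. Then the composite map $\frac1\hbar\mathcal J\hookrightarrow\frac1\hbar\mathcal D\to\mathfrak G$ is injective and its image is exactly $\mathfrak G_{\mathcal J}$; i.e. $\mathfrak G_{\mathcal J}=\frac1\hbar\mathcal J$.
   Context: Let $\Bbbk$ be a field of characteristic zero, $V$ a $2n$-dimensional $\Bbbk$-vector space with symplectic form $\omega$. Let $D$ be the universal enveloping algebra of the Heisenberg Lie algebra $V\oplus\Bbbk\hbar$ with $[x,y]=\omega(x,y)\hbar$, $[x,\hbar]=0$ for $x,y\in V$, graded with $V$ in degree 1 and $\hbar$ in degree 2, $D=\bigoplus_{i\ge0}D^i$; let $\mathcal D=\prod_{i\geq0}D^i$ and $\mathcal A=\mathcal D/\hbar\mathcal D$ (a commutative algebra of formal power series). Let $\frac1\hbar\mathcal D$ be the free rank one $\mathcal D$-submodule of $\Bbbk((\hbar))\otimes_{\Bbbk[[\hbar]]}\mathcal D$ generated by $\frac1\hbar$; it is a Lie algebra under the commutator $[a,b]=ab-ba$, and $\mathcal D$ is a Lie ideal in it. Let $\mathfrak G=\frac1\hbar\mathcal D/\frac1\hbar\Bbbk$ (quotient by the central subalgebra $\frac1\hbar D^0$); $\mathfrak G$ acts on $\mathcal D$ by $a\mapsto[a,-]$. Fix a Lagrangian subspace $\mathfrak x\subset V$ and let $\mathcal J\subset\mathcal D$ be the preimage of the ideal $\mathcal A\mathfrak x\subset\mathcal A$ under the projection $\mathcal D\to\mathcal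 A$; $\mathcal J$ is a two-sided ideal. *)

theory Defs
  imports Main
begin

text \<open>V = k^{2n} with a symplectic basis x_1..x_n, y_1..y_n,
  omega(x_i,y_j) = delta_ij, omega(x_i,x_j) = omega(y_i,y_j) = 0.
  By PBW, D has the k-basis of normally ordered monomials X^alpha Y^beta hbar^m;
  the completion D-hat = prod_i D^i is the space of all coefficient functions on
  these monomials (each graded piece is finite dimensional).  Index i < n of
  alpha/beta refers to x_i / y_i; entries at indices >= n are zero.\<close>

type_synonym mono = "(nat \<Rightarrow> nat) \<times> (nat \<Rightarrow> nat) \<times> nat"
type_synonym 'k ser = "mono \<Rightarrow> 'k"

definition supp_ok :: "nat \<Rightarrow> (nat \<Rightarrow> nat) \<Rightarrow> bool" where
  "supp_ok n a \<longleftrightarrow> (\<forall>i\<ge>n. a i = 0)"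

definition Dc :: "nat \<Rightarrow> ('k::field_char_0) ser set" where
  "Dc n = {f. \<forall>a b m. \<not> (supp_ok n a \<and> supp_ok n b) \<longrightarrow> f (a, b, m) = 0}"

text \<open>Normal ordering: y^b x^c = sum_k k! C(b,k) C(c,k) (-hbar)^k x^(c-k) y^(b-k)
  in each pair of variables, since x y - y x = hbar.\<close>
definition wcoeff :: "nat \<Rightarrow> (nat \<Rightarrow> nat) \<Rightarrow> (nat \<Rightarrow> nat) \<Rightarrow> (nat \<Rightarrow> nat) \<Rightarrow> 'k::field_char_0" where
  "wcoeff n b c k = (-1) ^ (\<Sum>i<n. k i) *
     (\<Prod>i<n. of_nat (fact (k i) * (b i choose k i) * (c i choose k i)))"

definition wterms :: "nat \<Rightarrow> (nat \<Rightarrow> nat) \<Rightarrow> (nat \<Rightarrow> nat) \<Rightarrow> nat \<Rightarrow>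
   ((nat \<Rightarrow> nat) \<times> (nat \<Rightarrow> nat) \<times> nat \<times> (nat \<Rightarrow> nat) \<times> (nat \<Rightarrow> nat) \<times> nat \<times> (nat \<Rightarrow> nat)) set" where
  "wterms n A B M = {(a, b, m, c, d, p, k).
      supp_ok n a \<and> supp_ok n b \<and> supp_ok n c \<and> supp_ok n d \<and> supp_ok n k \<and>
      (\<forall>i. k i \<le> b i \<and> k i \<le> c i \<and> A i = a i + c i - k i \<and> B i = b i + d i - k i) \<and>
      M = m + p + (\<Sum>i<n. k i)}"

definition wmult :: "nat \<Rightarrow> ('k::field_char_0) ser \<Rightarrow> 'k ser \<Rightarrow> 'k ser" where
  "wmult n f g = (\<lambda>(A, B, M). \<Sum>(a, b, m, c, d, p, k) \<in> wterms n A B M.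
      wcoeff n b c k * f (a, b, m) * g (c, d, p))"

definition hbar :: "('k::field_char_0) ser" where
  "hbar = (\<lambda>t. if t = (\<lambda>_. 0, \<lambda>_. 0, 1) then 1 else 0)"

definition constc :: "'k \<Rightarrow> ('k::field_char_0) ser" where
  "constc c = (\<lambda>t. if t = (\<lambda>_. 0, \<lambda>_. 0, 0) then c else 0)"

text \<open>V = k^{2n}: coordinates i < n are x-coordinates, n <= i < 2n are y-coordinates.\<close>
definition Vsp :: "nat \<Rightarrow> (nat \<Rightarrow> 'k::field_char_0) set" where
  "Vsp n = {v. \<forall>i\<ge>2*n. v i = 0}"

definition omega :: "nat \<Rightarrow> (nat \<Rightarrow> 'k::field_char_0) \<Rightarrow> (nat \<Rightarrow> 'k) \<Rightarrow> 'k" where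
  "omega n u v = (\<Sum>i<n. u i * v (n + i) - u (n + i) * v i)"

definition lagrangian :: "nat \<Rightarrow> (nat \<Rightarrow> 'k::field_char_0) set \<Rightarrow> bool" where
  "lagrangian n L \<longleftrightarrow> L \<subseteq> Vsp n \<and> L = {v \<in> Vsp n. \<forall>u\<in>L. omega n u v = 0}"

definition unitv :: "nat \<Rightarrow> nat \<Rightarrow> nat" where
  "unitv i = (\<lambda>j. if j = i then 1 else 0)"

definition vemb :: "nat \<Rightarrow> (nat \<Rightarrow> 'k::field_char_0) \<Rightarrow> 'k ser" where
  "vemb n v = (\<lambda>t. \<Sum>i<n. (if t = (unitv i, \<lambda>_. 0, 0) then v i else 0)
                        + (if t = (\<lambda>_. 0, unitv i, 0) then v (n + i) else 0))"

text \<open>J: preimage in D of the ideal of A = D/hbar D generated by the Lagrangian L.\<close>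
definition Jideal :: "nat \<Rightarrow> (nat \<Rightarrow> 'k::field_char_0) set \<Rightarrow> 'k ser set" where
  "Jideal n L = {j \<in> Dc n. \<exists>ls gs h. length gs = length ls \<and> set ls \<subseteq> L \<and>
      set gs \<subseteq> Dc n \<and> h \<in> Dc n \<and>
      j = (\<lambda>t. (\<Sum>i<length ls. wmult n (vemb n (ls ! i)) (gs ! i) t) + wmult n hbar h t)}"

text \<open>The element a/hbar of (1/hbar)D is represented by a.  Its class in
  G = (1/hbar)D / (1/hbar)k is the coset of a modulo constants.\<close>
definition gcls :: "nat \<Rightarrow> ('k::field_char_0) ser \<Rightarrow> 'k ser set" where
  "gcls n a = {(\<lambda>t. a t + constc c t) | c. True}"

definition Gset :: "nat \<Rightarrow> ('k::field_char_0) ser set set" where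
  "Gset n = gcls n ` Dc n"

text \<open>[a/hbar, b] \<in> J for all b \<in> J; [a/hbar,b] is the unique c with hbar c = ab - ba.\<close>
definition normalizes :: "nat \<Rightarrow> ('k::field_char_0) ser set \<Rightarrow> 'k ser \<Rightarrow> bool" where
  "normalizes n J a \<longleftrightarrow> (\<forall>b\<in>J. \<exists>c\<in>J. wmult n hbar c = (\<lambda>t. wmult n a b t - wmult n b a t))"

definition GJ :: "nat \<Rightarrow> (nat \<Rightarrow> 'k::field_char_0) set \<Rightarrow> 'k ser set set" where
  "GJ n L = {X \<in> Gset n. \<forall>a\<in>X. normalizes n (Jideal n L) a}"

end

theory Submission
  imports Defs "HOL-Library.Function_Algebras" "HOL-Library.Product_Plus" "HOL-Library.FuncSet"
    "HOL.Vector_Spaces"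
begin

text \<open>Reduction modulo \<open>\<hbar>\<close> maps \<open>D\<close> onto the commutative power series algebra \<open>A\<close>, maps \<open>J\<close>
  onto the ideal \<open>I\<close> generated by the linear forms in \<open>L\<close>, and, by the normal-ordering formula
  for the product, maps \<open>\<hbar>\<^sup>-\<^sup>1[a, b]\<close> to the Poisson bracket of the reductions. So \<open>a/\<hbar>\<close>
  normalizes \<open>J\<close> exactly when the bracket with its reduction \<open>P\<close> preserves \<open>I\<close>. As \<open>L\<close> is
  isotropic, \<open>I\<close> is closed under the bracket, so \<open>J/\<hbar>\<close> normalizes \<open>J\<close>. Conversely, if
  \<open>{P, l} \<in> I\<close> for all \<open>l \<in> L\<close>, splitting \<open>V\<close> along a linear projection onto \<open>L\<close> writes the
  Euler operator applied to \<open>P\<close> as an element of \<open>I\<close>; dividing each homogeneous part by its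
  degree gives \<open>P - P(0) \<in> I\<close>, i.e. \<open>a\<close> lies in \<open>J\<close> up to a constant. Injectivity holds because
  elements of \<open>J\<close> have no constant term.\<close>

lemma linear_projection_onto_subspace:
  fixes L :: "(nat \<Rightarrow> 'a::field) set"
  assumes zero: "(\<lambda>_. 0) \<in> L" and add: "\<And>u v. u \<in> L \<Longrightarrow> v \<in> L \<Longrightarrow> (\<lambda>i. u i + v i) \<in> L"
    and scale: "\<And>c u. u \<in> L \<Longrightarrow> (\<lambda>i. c * u i) \<in> L"
  obtains p where "\<And>u v. p (\<lambda>i. u i + v i) = (\<lambda>i. p u i + p v i)"
    and "\<And>c u. p (\<lambda>i. c * u i) = (\<lambda>i. c * p u i)" and "\<And>u. p u \<in> L" and "\<And>l. l \<in> L \<Longrightarrow> p l = l"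
proof -
  let ?scale = "\<lambda>(c::'a) (v::nat \<Rightarrow> 'a) i. c * v i"
  interpret vs: Vector_Spaces.vector_space ?scale
    by unfold_locales (auto simp: fun_eq_iff algebra_simps)
  interpret vp: Vector_Spaces.vector_space_pair ?scale ?scale by unfold_locales
  have "vs.subspace L"
    unfolding vs.subspace_def using zero add scale by (auto simp: plus_fun_def zero_fun_def)
  moreover obtain B where B: "B \<subseteq> L" "vs.independent B" "L \<subseteq> vs.span B"
    using vs.maximal_independent_subset by blast
  ultimately have span_B: "vs.span B = L" using vs.span_minimal by blast
  obtain g where g: "Vector_Spaces.linear ?scale ?scale g" "\<forall>x\<in>B. g x = id x" "range g = vs.span (id ` B)"
    using vp.linear_independent_extend_subspace[OF B(2), of id] by blast
  interpret g: Vector_Spaces.linear ?scale ?scale g by (rule g(1))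
  have linear_id: "Vector_Spaces.linear ?scale ?scale (id :: (nat \<Rightarrow> 'a) \<Rightarrow> _)"
    by unfold_locales auto
  show ?thesis
  proof
    show "g (\<lambda>i. u i + v i) = (\<lambda>i. g u i + g v i)" for u v
      using g.add[of u v] by (simp add: plus_fun_def)
    show "g (\<lambda>i. c * u i) = (\<lambda>i. c * g u i)" for c u
      using g.scale[of c u] by simp
    show "g u \<in> L" for u using g(3) span_B by auto
    show "g l = l" if "l \<in> L" for l
      using vp.linear_eq_on[OF g(1) linear_id, of l B] g(2) span_B that by auto
  qed
qed

lemma linear_map_sum:
  assumes add: "\<And>u v. p (\<lambda>i. u i + v i) = (\<lambda>i. p u i + p v i)"
    and scale: "\<And>c u. p (\<lambda>i. c * u i) = (\<lambda>i. c * p u i)"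
  shows "p (\<lambda>i. \<Sum>j\<in>A. c j * f j i) = (\<lambda>i. \<Sum>j\<in>A. c j * p (f j) i :: 'a::comm_ring_1)"
proof (induction A rule: infinite_finite_induct)
  case (insert x F)
  then show ?case by (simp add: add scale)
qed (use scale[of 0 "\<lambda>_. 0"] in simp_all)

lemma finite_bounded_funs:
  assumes "finite {i. A i \<noteq> (0::nat)}"
  shows "finite {a. \<forall>i. a i \<le> A i}"
proof -
  let ?S = "{i. A i \<noteq> 0}"
  have "inj_on (\<lambda>a. restrict a ?S) {a. \<forall>i. a i \<le> A i}"
  proof (rule inj_onI)
    fix a b assume ab: "a \<in> {a. \<forall>i. a i \<le> A i}" "b \<in> {a. \<forall>i. a i \<le> A i}"
      and e: "restrict a ?S = restrict b ?S"
    show "a = b"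
    proof
      fix i
      have "restrict a ?S i = restrict b ?S i" using e by simp
      moreover have "a i \<le> A i" "b i \<le> A i" using ab by auto
      ultimately show "a i = b i" by (cases "i \<in> ?S") auto
    qed
  qed
  moreover have "(\<lambda>a. restrict a ?S) ` {a. \<forall>i. a i \<le> A i} \<subseteq> PiE ?S (\<lambda>i. {..A i})"
    by (auto simp: PiE_iff extensional_def split: if_splits)
  moreover have "finite (PiE ?S (\<lambda>i. {..A i}))" using assms by (intro finite_PiE) auto
  ultimately show ?thesis by (meson finite_imageD finite_subset)
qed

lemma sum_lessThan_add:
  fixes a b :: nat shows "(\<Sum>i<a + b. f i) = (\<Sum>i<a. f i) + (\<Sum>i<b. f (a + i))"
  by (induction b) (simp_all add: add.assoc)

lemma sum_lessThan_double: fixes n :: nat shows "(\<Sum>j<2 * n. f j) = (\<Sum>j<n. f j) + (\<Sum>j<n. f (n + j))"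
  using sum_lessThan_add[of f n n] by (simp add: mult_2)

lemma sum_eq_single:
  assumes "finite S" "\<And>t. t \<in> S \<Longrightarrow> t \<noteq> t0 \<Longrightarrow> g t = 0"
  shows "sum g S = (if t0 \<in> S then g t0 else 0)"
proof -
  have "sum g S = sum g (S \<inter> {t0})"
    using assms by (intro sum.mono_neutral_right) auto
  then show ?thesis by (auto simp: Int_absorb1)
qed

section \<open>Power series in the variables \<open>x\<^sub>i\<close>, \<open>y\<^sub>i\<close>\<close>

type_synonym expo = "(nat \<Rightarrow> nat) \<times> (nat \<Rightarrow> nat)"

definition finite_expo :: "expo \<Rightarrow> bool" where
  "finite_expo u \<longleftrightarrow> finite {i. fst u i \<noteq> 0} \<and> finite {i. snd u i \<noteq> 0}"

definition splits :: "expo \<Rightarrow> (expo \<times> expo) set" where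
  "splits u = {(v, w). v + w = u}"

lemma finite_expo_add [simp]: "finite_expo (u + v) \<longleftrightarrow> finite_expo u \<and> finite_expo v"
proof -
  have "{i. f i + g i \<noteq> 0} = {i. f i \<noteq> 0} \<union> {i. g i \<noteq> (0::nat)}" for f g by auto
  then show ?thesis by (simp add: finite_expo_def) blast
qed

lemma finite_expo_zero [simp]: "finite_expo 0"
  by (simp add: finite_expo_def)

lemma finite_splits: assumes "finite_expo u" shows "finite (splits u)"
proof -
  let ?B1 = "{a. \<forall>i. a i \<le> fst u i}" and ?B2 = "{a. \<forall>i. a i \<le> snd u i}"
  have "finite ?B1" "finite ?B2"
    using assms by (auto simp: finite_expo_def intro: finite_bounded_funs)
  then have "finite ((?B1 \<times> ?B2) \<times> (?B1 \<times> ?B2))" by blast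
  moreover have "splits u \<subseteq> (?B1 \<times> ?B2) \<times> (?B1 \<times> ?B2)"
    by (auto simp: splits_def)
  ultimately show ?thesis by (rule finite_subset[rotated])
qed

lemma splits_finite_expo: "finite_expo u \<Longrightarrow> (v, w) \<in> splits u \<Longrightarrow> finite_expo v \<and> finite_expo w"
  by (auto simp: splits_def)

lemma sum_splits_assoc:
  fixes F :: "expo \<Rightarrow> expo \<Rightarrow> expo \<Rightarrow> 'a::comm_monoid_add"
  assumes u: "finite_expo u"
  shows "(\<Sum>(v, w)\<in>splits u. \<Sum>(x, y)\<in>splits v. F x y w) =
         (\<Sum>(x, v)\<in>splits u. \<Sum>(y, z)\<in>splits v. F x y z)"
proof -
  let ?T = "{(x, y, z). x + y + z = u}"
  have fin1: "finite (splits (fst p))" and fin2: "finite (splits (snd p))" if "p \<in> splits u" for p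
    using that u splits_finite_expo[of u "fst p" "snd p"] by (auto intro: finite_splits)
  have "(\<Sum>(v, w)\<in>splits u. \<Sum>(x, y)\<in>splits v. F x y w) =
        (\<Sum>(p, q)\<in>Sigma (splits u) (\<lambda>p. splits (fst p)). F (fst q) (snd q) (snd p))"
    using u fin1 by (subst sum.Sigma[symmetric]) (auto simp: finite_splits case_prod_beta)
  also have "\<dots> = (\<Sum>(x, y, z)\<in>?T. F x y z)"
    by (rule sum.reindex_bij_witness[where i="\<lambda>(x, y, z). ((x + y, z), (x, y))"
          and j="\<lambda>(p, q). (fst q, snd q, snd p)"]) (auto simp: splits_def)
  also have "\<dots> = (\<Sum>(p, q)\<in>Sigma (splits u) (\<lambda>p. splits (snd p)). F (fst p) (fst q) (snd q))"
    by (rule sum.reindex_bij_witness[where i="\<lambda>(p, q). (fst p, fst q, snd q)"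
          and j="\<lambda>(x, y, z). ((x, y + z), (y, z))"]) (auto simp: splits_def add.assoc)
  also have "\<dots> = (\<Sum>(x, v)\<in>splits u. \<Sum>(y, z)\<in>splits v. F x y z)"
    using u fin2 by (subst sum.Sigma[symmetric]) (auto simp: finite_splits case_prod_beta)
  finally show ?thesis .
qed

lemma sum_splits_swap: "(\<Sum>(v, w)\<in>splits u. F v w) = (\<Sum>(v, w)\<in>splits u. F w v)"
  by (rule sum.reindex_bij_witness[where i="\<lambda>(v, w). (w, v)" and j="\<lambda>(v, w). (w, v)"])
     (auto simp: splits_def add.commute)

lemma sum_splits_delta:
  fixes c :: "'a::semiring_0"
  assumes "finite_expo u" and "e + w0 = u"
  shows "(\<Sum>(v, w)\<in>splits u. (if v = e then c else 0) * F w) = c * F w0"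
proof -
  have "(\<Sum>(v, w)\<in>splits u. (if v = e then c else 0) * F w) =
     (\<Sum>p\<in>splits u. if p = (e, w0) then c * F w0 else 0)"
  proof (rule sum.cong[OF refl])
    fix p assume "p \<in> splits u"
    then obtain v w where "p = (v, w)" "v + w = u" by (auto simp: splits_def)
    then show "(case p of (v, w) \<Rightarrow> (if v = e then c else 0) * F w) =
      (if p = (e, w0) then c * F w0 else 0)"
      using assms(2) add_left_cancel[of e w w0] by auto
  qed
  also have "\<dots> = c * F w0"
    using assms finite_splits[OF assms(1)] by (subst sum.delta) (auto simp: splits_def)
  finally show ?thesis .
qed

lemma sum_splits_delta_none:
  fixes c :: "'a::semiring_0"
  assumes "\<And>w. e + w \<noteq> u"
  shows "(\<Sum>(v, w)\<in>splits u. (if v = e then c else 0) * F w) = 0"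
  using assms by (intro sum.neutral) (fastforce simp: splits_def)

lemma supp_ok_le: "supp_ok n A \<Longrightarrow> (\<And>i. a i \<le> A i) \<Longrightarrow> supp_ok n a"
  unfolding supp_ok_def by (metis le_zero_eq)

lemma supp_ok_add: "supp_ok n a \<Longrightarrow> supp_ok n b \<Longrightarrow> supp_ok n (\<lambda>i. a i + b i)"
  unfolding supp_ok_def by simp

lemma supp_ok_zero [simp]: "supp_ok n (\<lambda>_. 0)"
  by (simp add: supp_ok_def)

lemma unitv_same [simp]: "unitv i i = 1"
  by (simp add: unitv_def)

lemma supp_ok_unitv: "i < n \<Longrightarrow> supp_ok n (unitv i)"
  by (simp add: supp_ok_def unitv_def)

lemma finite_expo_supp_ok: "supp_ok n a \<Longrightarrow> supp_ok n b \<Longrightarrow> finite_expo (a, b)"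
proof -
  have "supp_ok n f \<Longrightarrow> finite {i. f i \<noteq> 0}" for f
    by (rule finite_subset[of _ "{..<n}"]) (auto simp: supp_ok_def not_less[symmetric])
  then show "supp_ok n a \<Longrightarrow> supp_ok n b \<Longrightarrow> finite_expo (a, b)" by (simp add: finite_expo_def)
qed

lemma splits_iff: "(v, w) \<in> splits (A, B) \<longleftrightarrow> (\<forall>i. A i = fst v i + fst w i \<and> B i = snd v i + snd w i)"
  by (cases v; cases w) (auto simp: splits_def fun_eq_iff)

lemma supp_ok_splits_iff:
  assumes "(v, w) \<in> splits (A, B)"
  shows "supp_ok n A \<and> supp_ok n B \<longleftrightarrow>
    supp_ok n (fst v) \<and> supp_ok n (snd v) \<and> supp_ok n (fst w) \<and> supp_ok n (snd w)"
  using assms unfolding splits_iff supp_ok_def by auto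

text \<open>Variables \<open>x\<^sub>i\<close>, \<open>y\<^sub>i\<close> with \<open>i \<ge> n\<close> are allowed here; \<open>mps_supported n\<close>
  excludes them where it matters.\<close>

typedef (overloaded) ('k::zero) mps = "{f :: expo \<Rightarrow> 'k. \<forall>u. \<not> finite_expo u \<longrightarrow> f u = 0}"
  morphisms mcoeff Abs_mps by (rule exI[of _ "\<lambda>_. 0"]) auto

setup_lifting type_definition_mps

lemma mcoeff_not_finite_expo: "\<not> finite_expo u \<Longrightarrow> mcoeff f u = 0"
  using mcoeff[of f] by (cases u) auto

lemma mps_eqI: "(\<And>u. finite_expo u \<Longrightarrow> mcoeff f u = mcoeff g u) \<Longrightarrow> f = g"
  by (metis mcoeff_inject mcoeff_not_finite_expo ext)

instantiation mps :: (comm_ring_1) comm_ring_1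
begin
lift_definition zero_mps :: "'a mps" is "\<lambda>_. 0" by simp
lift_definition one_mps :: "'a mps" is "\<lambda>u. if u = 0 then 1 else 0" by auto
lift_definition plus_mps :: "'a mps \<Rightarrow> 'a mps \<Rightarrow> 'a mps" is "\<lambda>f g u. f u + g u" by simp
lift_definition minus_mps :: "'a mps \<Rightarrow> 'a mps \<Rightarrow> 'a mps" is "\<lambda>f g u. f u - g u" by simp
lift_definition uminus_mps :: "'a mps \<Rightarrow> 'a mps" is "\<lambda>f u. - f u" by simp
lift_definition times_mps :: "'a mps \<Rightarrow> 'a mps \<Rightarrow> 'a mps" is
  "\<lambda>f g u. if finite_expo u then (\<Sum>(v, w)\<in>splits u. f v * g w) else 0" by simp
instance
proof
  fix a b c :: "'a mps"
  show "a + b + c = a + (b + c)" by (rule mps_eqI) (simp add: plus_mps.rep_eq add.assoc)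
  show "a + b = b + a" by (rule mps_eqI) (simp add: plus_mps.rep_eq add.commute)
  show "0 + a = a" by (rule mps_eqI) (simp add: plus_mps.rep_eq zero_mps.rep_eq)
  show "- a + a = 0" by (rule mps_eqI) (simp add: plus_mps.rep_eq zero_mps.rep_eq uminus_mps.rep_eq)
  show "a - b = a + - b" by (rule mps_eqI) (simp add: plus_mps.rep_eq minus_mps.rep_eq uminus_mps.rep_eq)
  show "(a + b) * c = a * c + b * c"
    by (rule mps_eqI) (simp add: plus_mps.rep_eq times_mps.rep_eq distrib_right sum.distrib case_prod_beta)
  show "a * b = b * a"
    by (rule mps_eqI) (simp add: times_mps.rep_eq mult.commute sum_splits_swap[where F="\<lambda>v w. mcoeff a v * mcoeff b w"])
  show "1 * a = a"
    by (rule mps_eqI) (simp add: times_mps.rep_eq one_mps.rep_eq sum_splits_delta)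
  show "(0::'a mps) \<noteq> 1"
    by (metis one_mps.rep_eq zero_mps.rep_eq zero_neq_one)
  show "a * b * c = a * (b * c)"
  proof (rule mps_eqI)
    fix u assume u: "finite_expo u"
    have "mcoeff (a * b * c) u = (\<Sum>(v, w)\<in>splits u. \<Sum>(x, y)\<in>splits v. mcoeff a x * mcoeff b y * mcoeff c w)"
      using u by (auto simp: times_mps.rep_eq sum_distrib_right case_prod_beta dest: splits_finite_expo
        intro!: sum.cong)
    also have "\<dots> = (\<Sum>(x, v)\<in>splits u. \<Sum>(y, z)\<in>splits v. mcoeff a x * mcoeff b y * mcoeff c z)"
      by (rule sum_splits_assoc[OF u])
    also have "\<dots> = mcoeff (a * (b * c)) u"
      using u by (auto simp: times_mps.rep_eq sum_distrib_left case_prod_beta mult.assoc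
        dest: splits_finite_expo intro!: sum.cong)
    finally show "mcoeff (a * b * c) u = mcoeff (a * (b * c)) u" .
  qed
qed
end

text \<open>Variable \<open>(i, False)\<close> stands for \<open>x\<^sub>i\<close> and \<open>(i, True)\<close> for \<open>y\<^sub>i\<close>.\<close>

definition var_exp :: "nat \<times> bool \<Rightarrow> expo \<Rightarrow> nat" where
  "var_exp k u = (if snd k then snd u (fst k) else fst u (fst k))"

definition var_unit :: "nat \<times> bool \<Rightarrow> expo" where
  "var_unit k = (if snd k then (0, unitv (fst k)) else (unitv (fst k), 0))"

lemma finite_expo_var_unit [simp]: "finite_expo (var_unit k)"
proof -
  have "{j. unitv (fst k) j \<noteq> 0} \<subseteq> {fst k}" by (auto simp: unitv_def)
  then show ?thesis by (auto simp: finite_expo_def var_unit_def intro: finite_subset)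
qed

lemma var_exp_add [simp]: "var_exp k (u + v) = var_exp k u + var_exp k v"
  by (simp add: var_exp_def)

lemma var_exp_zero [simp]: "var_exp k 0 = 0"
  by (simp add: var_exp_def)

lemma var_exp_var_unit: "var_exp k (var_unit k') = (if k = k' then 1 else 0)"
  by (cases k; cases k') (auto simp: var_exp_def var_unit_def unitv_def)

lemma diff_var_unit_add: "var_exp k u \<ge> 1 \<Longrightarrow> u - var_unit k + var_unit k = u"
  by (cases u) (auto simp: var_exp_def var_unit_def unitv_def fun_eq_iff)

lemma add_var_unit_eq_var_unit: "u + var_unit k = var_unit k' \<longleftrightarrow> u = 0 \<and> k = k'"
proof (cases "k = k'")
  case False
  have "u + var_unit k \<noteq> var_unit k'"
  proof
    assume "u + var_unit k = var_unit k'"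
    then have "var_exp k (u + var_unit k) = var_exp k (var_unit k')" by simp
    then show False using False by (simp add: var_exp_var_unit)
  qed
  then show ?thesis using False by simp
qed simp

lemma add_var_unit_neq_zero: "u + var_unit k \<noteq> 0"
proof
  assume "u + var_unit k = 0"
  then have "var_exp k (u + var_unit k) = 0" by simp
  then show False by (simp add: var_exp_var_unit)
qed

lemma sum_splits_shift:
  fixes F :: "expo \<Rightarrow> expo \<Rightarrow> 'a::comm_ring_1"
  assumes u: "finite_expo u"
  shows "(\<Sum>(v, w)\<in>splits (u + var_unit k). of_nat (var_exp k v) * F v w) =
         (\<Sum>(v, w)\<in>splits u. of_nat (var_exp k v + 1) * F (v + var_unit k) w)"
proof -
  let ?e = "var_unit k"
  let ?S = "{p \<in> splits (u + ?e). var_exp k (fst p) \<ge> 1}"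
  have "(\<Sum>(v, w)\<in>splits (u + ?e). of_nat (var_exp k v) * F v w) =
        (\<Sum>(v, w)\<in>?S. of_nat (var_exp k v) * F v w)"
    using u by (intro sum.mono_neutral_right) (auto simp: finite_splits Suc_le_eq intro: gr0I)
  also have "\<dots> = (\<Sum>(v, w)\<in>splits u. of_nat (var_exp k v + 1) * F (v + ?e) w)"
  proof (rule sum.reindex_bij_witness[where i="\<lambda>(v, w). (v + ?e, w)" and j="\<lambda>(v, w). (v - ?e, w)"])
    fix p assume "p \<in> ?S"
    then obtain v w where p: "p = (v, w)" "v + w = u + ?e" and v: "var_exp k v \<ge> 1"
      by (cases p) (auto simp: splits_def)
    have "v - ?e + w + ?e = u + ?e"
      using p(2) diff_var_unit_add[OF v] by (metis add.commute add.left_commute)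
    then show "(case p of (v, w) \<Rightarrow> (v - ?e, w)) \<in> splits u"
      by (simp add: p splits_def)
    show "(case (case p of (v, w) \<Rightarrow> (v - ?e, w)) of (v, w) \<Rightarrow> (v + ?e, w)) = p"
      by (simp add: p diff_var_unit_add[OF v])
    have "var_exp k v = var_exp k (v - ?e) + 1"
      using arg_cong[OF diff_var_unit_add[OF v], of "var_exp k"] by (simp add: var_exp_var_unit)
    then show "(case (case p of (v, w) \<Rightarrow> (v - ?e, w)) of
           (v, w) \<Rightarrow> of_nat (var_exp k v + 1) * F (v + ?e) w) =
         (case p of (v, w) \<Rightarrow> of_nat (var_exp k v) * F v w)"
      by (simp add: p diff_var_unit_add[OF v])
  qed (auto simp: splits_def var_exp_var_unit add.commute add.left_commute)
  finally show ?thesis .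
qed

lift_definition mvar :: "nat \<times> bool \<Rightarrow> 'a::comm_ring_1 mps" is
  "\<lambda>k u. if u = var_unit k then 1 else 0" by auto

lift_definition mconst :: "'a \<Rightarrow> 'a::comm_ring_1 mps" is
  "\<lambda>c u. if u = 0 then c else 0" by auto

lift_definition mderiv :: "nat \<times> bool \<Rightarrow> 'a::comm_ring_1 mps \<Rightarrow> 'a mps" is
  "\<lambda>k P u. of_nat (var_exp k u + 1) * P (u + var_unit k)" by auto

lemma mcoeff_add: "mcoeff (P + Q) u = mcoeff P u + mcoeff Q u"
  by (simp add: plus_mps.rep_eq)
lemma mcoeff_diff: "mcoeff (P - Q) u = mcoeff P u - mcoeff Q u"
  by (simp add: minus_mps.rep_eq)
lemma mcoeff_minus: "mcoeff (- P) u = - mcoeff P u"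
  by (simp add: uminus_mps.rep_eq)
lemma mcoeff_zero: "mcoeff 0 u = 0"
  by (simp add: zero_mps.rep_eq)
lemma mcoeff_mult: "finite_expo u \<Longrightarrow> mcoeff (P * Q) u = (\<Sum>(v, w)\<in>splits u. mcoeff P v * mcoeff Q w)"
  by (simp add: times_mps.rep_eq)
lemma mcoeff_sum: "mcoeff (\<Sum>i\<in>A. f i) u = (\<Sum>i\<in>A. mcoeff (f i) u)"
  by (induction A rule: infinite_finite_induct) (auto simp: mcoeff_add mcoeff_zero)

lemma mcoeff_mconst_mult: "mcoeff (mconst c * P) u = c * mcoeff P u"
  by (cases "finite_expo u")
     (simp_all add: mcoeff_mult mconst.rep_eq sum_splits_delta mcoeff_not_finite_expo)

lemma mcoeff_mvar_mult:
  "mcoeff (mvar k * P) u = (if var_exp k u \<ge> 1 then mcoeff P (u - var_unit k) else 0)"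
proof (cases "var_exp k u \<ge> 1")
  case True
  then have u: "var_unit k + (u - var_unit k) = u" by (metis diff_var_unit_add add.commute)
  show ?thesis
  proof (cases "finite_expo u")
    case False
    have "finite_expo (u - var_unit k) \<Longrightarrow> finite_expo u" by (subst u[symmetric]) simp
    then have "\<not> finite_expo (u - var_unit k)" using False by blast
    then show ?thesis using False by (simp add: mcoeff_not_finite_expo)
  qed (use True u in \<open>simp add: mcoeff_mult mvar.rep_eq sum_splits_delta\<close>)
next
  case False
  then have "var_unit k + w \<noteq> u" for w by (auto simp: var_exp_var_unit)
  then show ?thesis using False
    by (cases "finite_expo u")
       (simp_all add: mcoeff_mult mvar.rep_eq sum_splits_delta_none mcoeff_not_finite_expo)
qed

lemma mconst_zero [simp]: "mconst 0 = 0"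
  by (rule mps_eqI) (simp add: mconst.rep_eq mcoeff_zero)
lemma mconst_one [simp]: "mconst 1 = 1"
  by (rule mps_eqI) (simp add: mconst.rep_eq one_mps.rep_eq)
lemma mconst_add: "mconst (a + b) = mconst a + mconst b"
  by (rule mps_eqI) (simp add: mconst.rep_eq mcoeff_add)
lemma mconst_mult: "mconst (a * b) = mconst a * mconst b"
  by (rule mps_eqI) (simp add: mconst.rep_eq mcoeff_mconst_mult)
lemma mconst_minus: "mconst (- a) = - mconst a"
  by (rule mps_eqI) (simp add: mconst.rep_eq mcoeff_minus)
lemma mconst_diff: "mconst (a - b) = mconst a - mconst b"
  by (rule mps_eqI) (simp add: mconst.rep_eq mcoeff_diff)
lemma mconst_sum: "mconst (\<Sum>i\<in>A. f i) = (\<Sum>i\<in>A. mconst (f i))"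
  by (rule mps_eqI) (simp add: mconst.rep_eq mcoeff_sum)

lemma mderiv_add: "mderiv k (P + Q) = mderiv k P + mderiv k Q"
  by (rule mps_eqI) (simp add: mderiv.rep_eq mcoeff_add algebra_simps)
lemma mderiv_zero [simp]: "mderiv k 0 = 0"
  by (rule mps_eqI) (simp add: mderiv.rep_eq mcoeff_zero)
lemma mderiv_sum: "mderiv k (\<Sum>i\<in>A. f i) = (\<Sum>i\<in>A. mderiv k (f i))"
  by (rule mps_eqI) (simp add: mderiv.rep_eq mcoeff_sum sum_distrib_left)

lemma mderiv_mconst [simp]: "mderiv k (mconst c) = 0"
  by (rule mps_eqI) (simp add: mderiv.rep_eq mconst.rep_eq mcoeff_zero add_var_unit_neq_zero)

lemma mderiv_mvar: "mderiv k (mvar k') = mconst (if k = k' then 1 else 0)"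
  by (rule mps_eqI) (auto simp: mderiv.rep_eq mvar.rep_eq mconst.rep_eq add_var_unit_eq_var_unit)

text \<open>Split the factor \<open>var_exp k u + 1\<close> of the derivative according to the
  exponent each factor contributes, then shift exponents in each part.\<close>

lemma mderiv_mult: "mderiv k (P * Q) = mderiv k P * Q + P * mderiv k Q"
proof (rule mps_eqI)
  fix u :: expo assume u: "finite_expo u"
  let ?u' = "u + var_unit k"
  have "mcoeff (mderiv k (P * Q)) u =
      (\<Sum>(v, w)\<in>splits ?u'. of_nat (var_exp k u + 1) * (mcoeff P v * mcoeff Q w))"
    using u by (simp add: mderiv.rep_eq mcoeff_mult sum_distrib_left case_prod_beta)
  also have "\<dots> = (\<Sum>(v, w)\<in>splits ?u'. of_nat (var_exp k v) * (mcoeff P v * mcoeff Q w)) +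
      (\<Sum>(v, w)\<in>splits ?u'. of_nat (var_exp k w) * (mcoeff P v * mcoeff Q w))"
    unfolding sum.distrib[symmetric]
  proof (rule sum.cong[OF refl], clarify)
    fix v w assume "(v, w) \<in> splits ?u'"
    then have "var_exp k (v + w) = var_exp k ?u'" by (simp add: splits_def)
    then have "var_exp k u + 1 = var_exp k v + var_exp k w" by (simp add: var_exp_var_unit)
    then show "of_nat (var_exp k u + 1) * (mcoeff P v * mcoeff Q w) =
        of_nat (var_exp k v) * (mcoeff P v * mcoeff Q w) + of_nat (var_exp k w) * (mcoeff P v * mcoeff Q w)"
      by (metis distrib_right of_nat_add)
  qed
  also have "(\<Sum>(v, w)\<in>splits ?u'. of_nat (var_exp k v) * (mcoeff P v * mcoeff Q w)) =
      mcoeff (mderiv k P * Q) u"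
    using u by (simp add: sum_splits_shift mcoeff_mult mderiv.rep_eq mult.assoc)
  also have "(\<Sum>(v, w)\<in>splits ?u'. of_nat (var_exp k w) * (mcoeff P v * mcoeff Q w)) =
      mcoeff (P * mderiv k Q) u"
  proof -
    have "(\<Sum>(v, w)\<in>splits ?u'. of_nat (var_exp k w) * (mcoeff P v * mcoeff Q w)) =
        (\<Sum>(v, w)\<in>splits ?u'. of_nat (var_exp k v) * (mcoeff P w * mcoeff Q v))"
      by (rule sum_splits_swap)
    also have "\<dots> = (\<Sum>(v, w)\<in>splits u. of_nat (var_exp k v + 1) * (mcoeff P w * mcoeff Q (v + var_unit k)))"
      by (rule sum_splits_shift[OF u])
    also have "\<dots> = (\<Sum>(v, w)\<in>splits u. of_nat (var_exp k w + 1) * (mcoeff P v * mcoeff Q (w + var_unit k)))"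
      by (rule sum_splits_swap)
    also have "\<dots> = mcoeff (P * mderiv k Q) u"
      using u by (simp add: mcoeff_mult mderiv.rep_eq mult.assoc mult.left_commute)
    finally show ?thesis .
  qed
  finally show "mcoeff (mderiv k (P * Q)) u = mcoeff (mderiv k P * Q + P * mderiv k Q) u"
    by (simp add: mcoeff_add)
qed

section \<open>The Poisson bracket and the ideal generated by \<open>L\<close>\<close>

definition mps_of_vec :: "nat \<Rightarrow> (nat \<Rightarrow> 'a) \<Rightarrow> 'a::comm_ring_1 mps" where
  "mps_of_vec n v = (\<Sum>i<n. mconst (v i) * mvar (i, False) + mconst (v (n + i)) * mvar (i, True))"

definition poisson :: "nat \<Rightarrow> 'a::comm_ring_1 mps \<Rightarrow> 'a mps \<Rightarrow> 'a mps" where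
  "poisson n P Q = (\<Sum>i<n. mderiv (i, False) P * mderiv (i, True) Q - mderiv (i, True) P * mderiv (i, False) Q)"

definition dir_deriv :: "nat \<Rightarrow> (nat \<Rightarrow> 'a) \<Rightarrow> 'a::comm_ring_1 mps \<Rightarrow> 'a mps" where
  "dir_deriv n w P = (\<Sum>i<n. mconst (w i) * mderiv (i, False) P + mconst (w (n + i)) * mderiv (i, True) P)"

lemma mderiv_mps_of_vec:
  "mderiv (j, b) (mps_of_vec n v) = mconst (if j < n then (if b then v (n + j) else v j) else 0)"
proof -
  have "mderiv (j, b) (mps_of_vec n v) = (\<Sum>i<n. mconst (if i = j then (if b then v (n + j) else v j) else 0))"
    by (auto simp: mps_of_vec_def mderiv_sum mderiv_add mderiv_mult mderiv_mvar
        simp flip: mconst_mult mconst_add intro!: sum.cong)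
  also have "\<dots> = mconst (if j < n then (if b then v (n + j) else v j) else 0)"
    by (simp add: mconst_sum[symmetric])
  finally show ?thesis .
qed

lemma poisson_add_left: "poisson n (P + P') Q = poisson n P Q + poisson n P' Q"
  unfolding poisson_def sum.distrib[symmetric] by (rule sum.cong) (simp_all add: mderiv_add algebra_simps)

lemma poisson_add_right: "poisson n Q (P + P') = poisson n Q P + poisson n Q P'"
  unfolding poisson_def sum.distrib[symmetric] by (rule sum.cong) (simp_all add: mderiv_add algebra_simps)

lemma poisson_antisym: "poisson n P Q = - poisson n Q P"
  unfolding poisson_def sum_negf[symmetric] by (rule sum.cong) (simp_all add: algebra_simps)

lemma poisson_mult_right: "poisson n P (Q * R) = poisson n P Q * R + Q * poisson n P R"
  unfolding poisson_def sum_distrib_left sum_distrib_right sum.distrib[symmetric]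
  by (rule sum.cong) (simp_all add: mderiv_mult algebra_simps)

lemma poisson_mult_left: "poisson n (Q * R) P = poisson n Q P * R + Q * poisson n R P"
proof -
  have "poisson n (Q * R) P = - (poisson n P Q * R + Q * poisson n P R)"
    by (simp add: poisson_antisym[of n "Q * R"] poisson_mult_right)
  also have "\<dots> = poisson n Q P * R + Q * poisson n R P"
    by (simp add: poisson_antisym[of n Q P] poisson_antisym[of n R P] algebra_simps)
  finally show ?thesis .
qed

lemma poisson_mps_of_vec: "poisson n (mps_of_vec n u) (mps_of_vec n v) = mconst (omega n u v)"
  by (simp add: poisson_def mderiv_mps_of_vec omega_def mconst_sum mconst_diff mconst_mult)

inductive_set lin_ideal :: "nat \<Rightarrow> (nat \<Rightarrow> 'a::comm_ring_1) set \<Rightarrow> 'a mps set" for n L where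
  zero: "0 \<in> lin_ideal n L"
| gen: "l \<in> L \<Longrightarrow> mps_of_vec n l * q \<in> lin_ideal n L"
| add: "P \<in> lin_ideal n L \<Longrightarrow> Q \<in> lin_ideal n L \<Longrightarrow> P + Q \<in> lin_ideal n L"

lemma lin_ideal_mult: "P \<in> lin_ideal n L \<Longrightarrow> P * R \<in> lin_ideal n L"
  by (induction rule: lin_ideal.induct)
     (auto simp: distrib_right mult.assoc intro: lin_ideal.intros)

lemma lin_ideal_mult_left: "P \<in> lin_ideal n L \<Longrightarrow> R * P \<in> lin_ideal n L"
  using lin_ideal_mult[of P n L R] by (simp add: mult.commute)

lemma lin_ideal_sum: "(\<And>i. i \<in> A \<Longrightarrow> f i \<in> lin_ideal n L) \<Longrightarrow> (\<Sum>i\<in>A. f i) \<in> lin_ideal n L"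
  by (induction A rule: infinite_finite_induct) (auto intro: lin_ideal.intros)

lemma lin_ideal_sum_list:
  "P \<in> lin_ideal n L \<Longrightarrow> \<exists>ls qs. length qs = length ls \<and> set ls \<subseteq> L \<and>
      P = (\<Sum>i<length ls. mps_of_vec n (ls ! i) * qs ! i)"
proof (induction rule: lin_ideal.induct)
  case zero
  show ?case by (intro exI[of _ "[]"]) simp
next
  case (gen l q)
  show ?case using gen by (intro exI[of _ "[l]"] exI[of _ "[q]"]) simp
next
  case (add P Q)
  from add.IH obtain ls1 qs1 ls2 qs2 where
    P: "length qs1 = length ls1" "set ls1 \<subseteq> L" "P = (\<Sum>i<length ls1. mps_of_vec n (ls1 ! i) * qs1 ! i)" and
    Q: "length qs2 = length ls2" "set ls2 \<subseteq> L" "Q = (\<Sum>i<length ls2. mps_of_vec n (ls2 ! i) * qs2 ! i)"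
    by blast
  have "(\<Sum>i<length (ls1 @ ls2). mps_of_vec n ((ls1 @ ls2) ! i) * (qs1 @ qs2) ! i) = P + Q"
    unfolding length_append sum_lessThan_add P(3) Q(3)
    using P(1) Q(1) by (intro arg_cong2[where f="(+)"] sum.cong) (auto simp: nth_append)
  then show ?case using P Q by (intro exI[of _ "ls1 @ ls2"] exI[of _ "qs1 @ qs2"]) auto
qed

lemma mcoeff_zero_lin_ideal: "P \<in> lin_ideal n L \<Longrightarrow> mcoeff P 0 = 0"
  by (induction rule: lin_ideal.induct)
     (simp_all add: mcoeff_zero mcoeff_add mps_of_vec_def sum_distrib_right mcoeff_sum
       distrib_right mult.assoc mcoeff_mconst_mult mcoeff_mvar_mult)

lemma poisson_mps_of_vec_lin_ideal:
  assumes isotropic: "\<And>l l'. l \<in> L \<Longrightarrow> l' \<in> L \<Longrightarrow> omega n l l' = 0" and "l \<in> L"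
  shows "Q \<in> lin_ideal n L \<Longrightarrow> poisson n (mps_of_vec n l) Q \<in> lin_ideal n L"
proof (induction rule: lin_ideal.induct)
  case (gen l' q)
  have "poisson n (mps_of_vec n l) (mps_of_vec n l' * q) = mps_of_vec n l' * poisson n (mps_of_vec n l) q"
    using isotropic[OF \<open>l \<in> L\<close> gen] by (simp add: poisson_mult_right poisson_mps_of_vec)
  then show ?case using lin_ideal.gen[OF gen] by simp
next
  case (add P Q)
  then show ?case by (simp add: poisson_add_right lin_ideal.add)
qed (simp add: poisson_def lin_ideal.zero)

lemma poisson_lin_ideal:
  assumes isotropic: "\<And>l l'. l \<in> L \<Longrightarrow> l' \<in> L \<Longrightarrow> omega n l l' = 0" and Q: "Q \<in> lin_ideal n L"
  shows "P \<in> lin_ideal n L \<Longrightarrow> poisson n P Q \<in> lin_ideal n L"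
proof (induction rule: lin_ideal.induct)
  case (gen l q)
  then show ?case
    using lin_ideal_mult[OF poisson_mps_of_vec_lin_ideal[OF isotropic gen Q]]
    by (simp add: poisson_mult_left lin_ideal.intros)
next
  case (add P P')
  then show ?case by (simp add: poisson_add_left lin_ideal.add)
qed (simp add: poisson_def lin_ideal.zero)

section \<open>The Euler operator\<close>

definition std_basis :: "nat \<Rightarrow> nat \<Rightarrow> 'a::comm_ring_1" where
  "std_basis j = (\<lambda>i. if i = j then 1 else 0)"

lemma mps_of_vec_std_basis:
  assumes "j < n"
  shows "mps_of_vec n (std_basis j) = (mvar (j, False) :: 'a::comm_ring_1 mps)"
    and "mps_of_vec n (std_basis (n + j)) = (mvar (j, True) :: 'a mps)"
  using assms by (simp_all add: mps_of_vec_def std_basis_def if_distrib[of mconst] if_distrib[of "\<lambda>x. x * _"]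
      sum.delta cong: if_cong)

lemma dir_deriv_std_basis:
  assumes "j < n"
  shows "dir_deriv n (std_basis j) P = mderiv (j, False) (P :: 'a::comm_ring_1 mps)"
    and "dir_deriv n (std_basis (n + j)) P = mderiv (j, True) P"
  using assms by (simp_all add: dir_deriv_def std_basis_def if_distrib[of mconst] if_distrib[of "\<lambda>x. x * _"]
      sum.delta cong: if_cong)

lemma mps_of_vec_expand: "mps_of_vec n v = (\<Sum>j<2 * n. mconst (v j) * mps_of_vec n (std_basis j))"
  unfolding sum_lessThan_double mps_of_vec_def[of n v] sum.distrib
  by (intro arg_cong2[where f="(+)"] sum.cong) (simp_all add: mps_of_vec_std_basis)

lemma dir_deriv_expand: "dir_deriv n w P = (\<Sum>j<2 * n. mconst (w j) * dir_deriv n (std_basis j) P)"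
  unfolding sum_lessThan_double dir_deriv_def[of n w] sum.distrib
  by (intro arg_cong2[where f="(+)"] sum.cong) (simp_all add: dir_deriv_std_basis)

lemma mps_of_vec_add: "mps_of_vec n (\<lambda>i. u i + v i) = mps_of_vec n u + mps_of_vec n v"
  unfolding mps_of_vec_def sum.distrib[symmetric]
  by (rule sum.cong) (simp_all add: mconst_add algebra_simps)

definition total_deg :: "nat \<Rightarrow> expo \<Rightarrow> nat" where
  "total_deg n u = (\<Sum>i<n. fst u i + snd u i)"

lemma total_deg_add: "total_deg n (u + v) = total_deg n u + total_deg n v"
  by (simp add: total_deg_def sum.distrib)

lemma total_deg_var_unit: "i < n \<Longrightarrow> total_deg n (var_unit (i, b)) = 1"
  by (simp add: total_deg_def var_unit_def unitv_def sum.delta)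

lemma mcoeff_mvar_mult_mderiv: "mcoeff (mvar k * mderiv k P) u = of_nat (var_exp k u) * mcoeff P u"
proof (cases "var_exp k u \<ge> 1")
  case True
  have "var_exp k u = var_exp k (u - var_unit k) + 1"
    using arg_cong[OF diff_var_unit_add[OF True], of "var_exp k"] by (simp add: var_exp_var_unit)
  then show ?thesis using True by (simp add: mcoeff_mvar_mult mderiv.rep_eq diff_var_unit_add)
qed (simp add: mcoeff_mvar_mult Suc_le_eq)

definition euler :: "nat \<Rightarrow> 'a::comm_ring_1 mps \<Rightarrow> 'a mps" where
  "euler n P = (\<Sum>j<2 * n. mps_of_vec n (std_basis j) * dir_deriv n (std_basis j) P)"

lemma mcoeff_euler: "mcoeff (euler n P) u = of_nat (total_deg n u) * mcoeff P u"
proof -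
  have "euler n P = (\<Sum>j<n. mvar (j, False) * mderiv (j, False) P) + (\<Sum>j<n. mvar (j, True) * mderiv (j, True) P)"
    unfolding euler_def sum_lessThan_double
    by (intro arg_cong2[where f="(+)"] sum.cong) (simp_all add: mps_of_vec_std_basis dir_deriv_std_basis)
  then show ?thesis
    by (simp add: mcoeff_add mcoeff_sum mcoeff_mvar_mult_mderiv total_deg_def var_exp_def
        sum_distrib_right sum.distrib distrib_right)
qed

lift_definition div_deg :: "nat \<Rightarrow> 'a::field mps \<Rightarrow> 'a mps" is
  "\<lambda>n Q u. Q u / of_nat (total_deg n u)" by simp

lift_definition div_deg_succ :: "nat \<Rightarrow> 'a::field mps \<Rightarrow> 'a mps" is
  "\<lambda>n Q u. Q u / of_nat (total_deg n u + 1)" by simp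

definition mps_supported :: "nat \<Rightarrow> 'a::comm_ring_1 mps \<Rightarrow> bool" where
  "mps_supported n P \<longleftrightarrow> (\<forall>u. mcoeff P u \<noteq> 0 \<longrightarrow> supp_ok n (fst u) \<and> supp_ok n (snd u))"

lemma mps_supported_add: "mps_supported n P \<Longrightarrow> mps_supported n Q \<Longrightarrow> mps_supported n (P + Q)"
  unfolding mps_supported_def by (metis add.right_neutral mcoeff_add)

lemma mps_supported_diff: "mps_supported n P \<Longrightarrow> mps_supported n Q \<Longrightarrow> mps_supported n (P - Q)"
  unfolding mps_supported_def by (metis mcoeff_diff diff_zero)

lemma mps_supported_sum: "(\<And>i. i \<in> A \<Longrightarrow> mps_supported n (F i)) \<Longrightarrow> mps_supported n (\<Sum>i\<in>A. F i)"
proof (induction A rule: infinite_finite_induct)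
  case (insert x F)
  then show ?case by (simp add: mps_supported_add)
qed (simp_all add: mps_supported_def mcoeff_zero)

lemma mps_supported_mult:
  assumes P: "mps_supported n P" and Q: "mps_supported n Q"
  shows "mps_supported n (P * Q)"
  unfolding mps_supported_def
proof (intro allI impI)
  fix u assume nz: "mcoeff (P * Q) u \<noteq> 0"
  obtain A B where u: "u = (A, B)" by (cases u)
  from nz have "finite_expo u" using mcoeff_not_finite_expo by blast
  with nz obtain p where "p \<in> splits u" "mcoeff P (fst p) * mcoeff Q (snd p) \<noteq> 0"
    by (auto simp: mcoeff_mult case_prod_beta elim!: sum.not_neutral_contains_not_neutral)
  then obtain v w where vw: "(v, w) \<in> splits (A, B)" "mcoeff P v \<noteq> 0" "mcoeff Q w \<noteq> 0"
    by (metis mult_zero_left mult_zero_right prod.collapse u)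
  have "supp_ok n (fst v) \<and> supp_ok n (snd v)" "supp_ok n (fst w) \<and> supp_ok n (snd w)"
    using P Q vw(2,3) unfolding mps_supported_def by blast+
  then show "supp_ok n (fst u) \<and> supp_ok n (snd u)"
    using supp_ok_splits_iff[OF vw(1)] by (simp add: u)
qed

lemma mps_supported_mderiv:
  assumes "i < n" and P: "mps_supported n P"
  shows "mps_supported n (mderiv (i, b) P)"
  unfolding mps_supported_def
proof (intro allI impI)
  fix u assume "mcoeff (mderiv (i, b) P) u \<noteq> 0"
  then have "mcoeff P (u + var_unit (i, b)) \<noteq> 0" by (auto simp: mderiv.rep_eq)
  then have "supp_ok n (fst (u + var_unit (i, b))) \<and> supp_ok n (snd (u + var_unit (i, b)))"
    using P unfolding mps_supported_def by blast
  then show "supp_ok n (fst u) \<and> supp_ok n (snd u)"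
    using supp_ok_le[of n "fst (u + var_unit (i, b))" "fst u"] supp_ok_le[of n "snd (u + var_unit (i, b))" "snd u"]
    by simp
qed

lemma mps_supported_poisson:
  "mps_supported n P \<Longrightarrow> mps_supported n Q \<Longrightarrow> mps_supported n (poisson n P Q)"
  unfolding poisson_def
  by (intro mps_supported_sum mps_supported_diff mps_supported_mult mps_supported_mderiv; simp)

lemma mcoeff_mps_of_vec_mult: "mcoeff (mps_of_vec n v * q) u = (\<Sum>i<n.
    v i * (if var_exp (i, False) u \<ge> 1 then mcoeff q (u - var_unit (i, False)) else 0) +
    v (n + i) * (if var_exp (i, True) u \<ge> 1 then mcoeff q (u - var_unit (i, True)) else 0))"
  unfolding mps_of_vec_def sum_distrib_right mcoeff_sum distrib_right
  by (simp add: mcoeff_add mult.assoc mcoeff_mconst_mult mcoeff_mvar_mult)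

lemma div_deg_mps_of_vec_mult: "div_deg n (mps_of_vec n v * q) = mps_of_vec n v * div_deg_succ n (q :: 'a::field mps)"
proof (rule mps_eqI)
  fix u :: expo
  have deg: "total_deg n u = total_deg n (u - var_unit (i, b)) + 1" if "i < n" "var_exp (i, b) u \<ge> 1" for i b
    using arg_cong[OF diff_var_unit_add[OF that(2)], of "total_deg n"] that(1)
    by (simp add: total_deg_add total_deg_var_unit)
  show "mcoeff (div_deg n (mps_of_vec n v * q)) u = mcoeff (mps_of_vec n v * div_deg_succ n q) u"
    unfolding div_deg.rep_eq mcoeff_mps_of_vec_mult sum_divide_distrib
  proof (rule sum.cong[OF refl])
    fix i assume "i \<in> {..<n}"
    then have deg_i: "var_exp (i, b) u \<ge> 1 \<Longrightarrow>
        1 + of_nat (total_deg n (u - var_unit (i, b))) = (of_nat (total_deg n u) :: 'a)" for b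
      using deg by simp
    show "(v i * (if var_exp (i, False) u \<ge> 1 then mcoeff q (u - var_unit (i, False)) else 0) +
        v (n + i) * (if var_exp (i, True) u \<ge> 1 then mcoeff q (u - var_unit (i, True)) else 0)) /
        of_nat (total_deg n u) =
      v i * (if var_exp (i, False) u \<ge> 1 then mcoeff (div_deg_succ n q) (u - var_unit (i, False)) else 0) +
      v (n + i) * (if var_exp (i, True) u \<ge> 1 then mcoeff (div_deg_succ n q) (u - var_unit (i, True)) else 0)"
      using deg_i[of False] deg_i[of True] by (simp add: div_deg_succ.rep_eq add_divide_distrib)
  qed
qed

lemma div_deg_zero [simp]: "div_deg n 0 = 0"
  by (rule mps_eqI) (simp add: div_deg.rep_eq mcoeff_zero)

lemma div_deg_add: "div_deg n (P + Q) = div_deg n P + div_deg n Q"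
  by (rule mps_eqI) (simp add: div_deg.rep_eq mcoeff_add add_divide_distrib)

lemma div_deg_lin_ideal: "P \<in> lin_ideal n L \<Longrightarrow> div_deg n P \<in> lin_ideal n L"
  by (induction rule: lin_ideal.induct)
     (simp_all add: div_deg_add div_deg_mps_of_vec_mult lin_ideal.intros)

text \<open>For the monomials of degree zero, where \<open>div_deg\<close> divides by zero, the coefficient of
  \<open>euler n P\<close> vanishes, and only the constant term of a supported \<open>P\<close> has degree zero.\<close>

lemma div_deg_euler:
  fixes P :: "'a::field_char_0 mps"
  assumes "mps_supported n P"
  shows "div_deg n (euler n P) = P - mconst (mcoeff P 0)"
proof (rule mps_eqI)
  fix u :: expo
  show "mcoeff (div_deg n (euler n P)) u = mcoeff (P - mconst (mcoeff P 0)) u"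
  proof (cases "total_deg n u = 0")
    case False
    then have "u \<noteq> 0" by (auto simp: total_deg_def)
    then show ?thesis using False by (simp add: div_deg.rep_eq mcoeff_euler mcoeff_diff mconst.rep_eq)
  next
    case True
    have "mcoeff P u = 0" if "u \<noteq> 0"
    proof (rule ccontr)
      assume "mcoeff P u \<noteq> 0"
      then have "supp_ok n (fst u)" "supp_ok n (snd u)"
        using assms by (cases u; auto simp: mps_supported_def)+
      then have "fst u = 0" "snd u = 0"
        using True by (auto simp: total_deg_def supp_ok_def fun_eq_iff) (metis lessThan_iff not_less)+
      then show False using that by (simp add: prod_eq_iff)
    qed
    then show ?thesis using True by (auto simp: div_deg.rep_eq mcoeff_euler mcoeff_diff mconst.rep_eq)
  qed
qed

lemma lagrangian_mem_iff:
  assumes "lagrangian n L"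
  shows "v \<in> L \<longleftrightarrow> v \<in> Vsp n \<and> (\<forall>u\<in>L. omega n u v = 0)"
  using assms unfolding lagrangian_def by blast

lemma lagrangian_isotropic: "lagrangian n L \<Longrightarrow> l \<in> L \<Longrightarrow> l' \<in> L \<Longrightarrow> omega n l l' = 0"
  using lagrangian_mem_iff by blast

lemma omega_add_right: "omega n u (\<lambda>i. v i + w i) = omega n u v + omega n u w"
  by (simp add: omega_def sum.distrib[symmetric] algebra_simps)

lemma omega_scale_right: "omega n u (\<lambda>i. c * v i) = c * omega n u v"
  by (simp add: omega_def sum_distrib_left algebra_simps)

lemma lagrangian_subspace:
  assumes "lagrangian n L"
  shows "(\<lambda>_. 0) \<in> L" and "\<And>u v. u \<in> L \<Longrightarrow> v \<in> L \<Longrightarrow> (\<lambda>i. u i + v i) \<in> L"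
    and "\<And>c u. u \<in> L \<Longrightarrow> (\<lambda>i. c * u i) \<in> L"
proof -
  note mem = lagrangian_mem_iff[OF assms]
  show "(\<lambda>_. 0) \<in> L" by (rule iffD2[OF mem]) (simp add: omega_def Vsp_def)
  show "(\<lambda>i. u i + v i) \<in> L" if "u \<in> L" "v \<in> L" for u v
    using that[THEN iffD1[OF mem]] by (intro iffD2[OF mem]) (simp add: omega_add_right Vsp_def)
  show "(\<lambda>i. c * u i) \<in> L" if "u \<in> L" for c u
    using that[THEN iffD1[OF mem]] by (intro iffD2[OF mem]) (simp add: omega_scale_right Vsp_def)
qed

lemma Vsp_expand:
  assumes "u \<in> Vsp n"
  shows "(\<lambda>i. \<Sum>j<2 * n. u j * std_basis j i) = (u :: nat \<Rightarrow> 'a::field_char_0)"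
proof
  fix i
  have "(\<Sum>j<2 * n. u j * std_basis j i) = (\<Sum>j<2 * n. if j = i then u j else 0)"
    by (rule sum.cong) (auto simp: std_basis_def)
  also have "\<dots> = u i" using assms by (subst sum.delta) (auto simp: Vsp_def not_less)
  finally show "(\<Sum>j<2 * n. u j * std_basis j i) = u i" .
qed

definition sympl_dual :: "nat \<Rightarrow> (nat \<Rightarrow> 'a) \<Rightarrow> nat \<Rightarrow> 'a::comm_ring_1" where
  "sympl_dual n w = (\<lambda>i. if i < n then - w (n + i) else if i < 2 * n then w (i - n) else 0)"

lemma sympl_dual_in_Vsp: "sympl_dual n w \<in> Vsp n"
  by (simp add: Vsp_def sympl_dual_def)

lemma omega_sympl_dual: "omega n u (sympl_dual n w) = (\<Sum>j<2 * n. u j * w j)"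
  unfolding omega_def sum_lessThan_double sum.distrib[symmetric]
  by (rule sum.cong) (auto simp: sympl_dual_def)

lemma poisson_mps_of_vec_sympl_dual: "poisson n P (mps_of_vec n (sympl_dual n w)) = dir_deriv n w P"
  unfolding poisson_def dir_deriv_def
  by (rule sum.cong) (simp_all add: mderiv_mps_of_vec sympl_dual_def mconst_minus mult.commute)

lemma euler_split:
  "euler n P = (\<Sum>j<2 * n. mps_of_vec n (p j) * dir_deriv n (std_basis j) P) +
    (\<Sum>k<2 * n. mps_of_vec n (std_basis k) * dir_deriv n (\<lambda>j. std_basis j k - p j k) P)"
proof -
  define d where "d j = (\<lambda>i. std_basis j i - p j i)" for j
  have "mps_of_vec n (std_basis j) = mps_of_vec n (p j) + mps_of_vec n (d j)" for j
    using mps_of_vec_add[of n "p j" "d j"] by (simp add: d_def)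
  then have "euler n P = (\<Sum>j<2 * n. mps_of_vec n (p j) * dir_deriv n (std_basis j) P) +
      (\<Sum>j<2 * n. mps_of_vec n (d j) * dir_deriv n (std_basis j) P)"
    unfolding euler_def sum.distrib[symmetric] by (simp add: distrib_right)
  also have "(\<Sum>j<2 * n. mps_of_vec n (d j) * dir_deriv n (std_basis j) P) =
      (\<Sum>j<2 * n. \<Sum>k<2 * n. mconst (d j k) * mps_of_vec n (std_basis k) * dir_deriv n (std_basis j) P)"
    by (subst mps_of_vec_expand) (simp add: sum_distrib_right)
  also have "\<dots> = (\<Sum>k<2 * n. \<Sum>j<2 * n. mconst (d j k) * mps_of_vec n (std_basis k) * dir_deriv n (std_basis j) P)"
    by (rule sum.swap)
  also have "\<dots> = (\<Sum>k<2 * n. mps_of_vec n (std_basis k) * dir_deriv n (\<lambda>j. d j k) P)"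
    by (simp add: dir_deriv_expand[of n "\<lambda>j. d j _"] sum_distrib_left mult_ac)
  finally show ?thesis by (simp add: d_def)
qed

text \<open>With \<open>p\<close> a linear projection onto \<open>L\<close>, the first part of the split lies in the ideal
  directly, and the second is \<open>\<Sum>\<^sub>k e\<^sub>k {P, l\<^sub>k}\<close> with \<open>l\<^sub>k \<in> L\<close>, since \<open>\<omega>(u, l\<^sub>k) = u\<^sub>k - (p u)\<^sub>k = 0\<close>
  for \<open>u \<in> L\<close>.\<close>

lemma euler_lin_ideal:
  fixes L :: "(nat \<Rightarrow> 'a::field_char_0) set" and P :: "'a mps"
  assumes lag: "lagrangian n L"
    and poisson_P: "\<And>l. l \<in> L \<Longrightarrow> poisson n P (mps_of_vec n l) \<in> lin_ideal n L"
  shows "euler n P \<in> lin_ideal n L"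
proof -
  obtain p where p_add: "\<And>u v. p (\<lambda>i. u i + v i) = (\<lambda>i. p u i + p v i)"
    and p_scale: "\<And>c u. p (\<lambda>i. c * u i) = (\<lambda>i. c * p u i)"
    and p_L: "\<And>u. p u \<in> L" and p_id: "\<And>l. l \<in> L \<Longrightarrow> p l = l"
    using linear_projection_onto_subspace[OF lagrangian_subspace[OF lag]] by blast
  have l_L: "sympl_dual n (\<lambda>j. std_basis j k - p (std_basis j) k) \<in> L" for k
    unfolding lagrangian_mem_iff[OF lag]
  proof (intro conjI ballI sympl_dual_in_Vsp)
    fix u assume u: "u \<in> L"
    then have u_V: "u \<in> Vsp n" using lagrangian_mem_iff[OF lag] by blast
    have "omega n u (sympl_dual n (\<lambda>j. std_basis j k - p (std_basis j) k)) =
        (\<Sum>j<2 * n. u j * std_basis j k) - (\<Sum>j<2 * n. u j * p (std_basis j) k)"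
      by (simp add: omega_sympl_dual sum_subtractf[symmetric] algebra_simps)
    also have "\<dots> = 0"
    proof -
      have "p (\<lambda>i. \<Sum>j<2 * n. u j * std_basis j i) = (\<lambda>i. \<Sum>j<2 * n. u j * p (std_basis j) i)"
        by (rule linear_map_sum[OF p_add p_scale])
      then have "u = (\<lambda>i. \<Sum>j<2 * n. u j * p (std_basis j) i)"
        by (simp only: Vsp_expand[OF u_V] p_id[OF u])
      then show ?thesis using fun_cong[OF Vsp_expand[OF u_V], of k] by (metis diff_self)
    qed
    finally show "omega n u (sympl_dual n (\<lambda>j. std_basis j k - p (std_basis j) k)) = 0" .
  qed
  show ?thesis
    unfolding euler_split[where p="\<lambda>j. p (std_basis j)"]
    using p_L poisson_P[OF l_L]
    by (intro lin_ideal.add lin_ideal_sum lin_ideal.gen lin_ideal_mult_left)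
       (simp_all add: poisson_mps_of_vec_sympl_dual)
qed

lemma sub_const_lin_ideal:
  fixes P :: "'a::field_char_0 mps"
  assumes "lagrangian n L" "mps_supported n P"
    and "\<And>l. l \<in> L \<Longrightarrow> poisson n P (mps_of_vec n l) \<in> lin_ideal n L"
  shows "P - mconst (mcoeff P 0) \<in> lin_ideal n L"
  using div_deg_lin_ideal[OF euler_lin_ideal[OF assms(1,3)]] div_deg_euler[OF assms(2)] by simp

section \<open>Normal ordering in \<open>D\<close>\<close>

lemma wterms_supp_ok: "(a, b, m, c, d, p, k) \<in> wterms n A B M \<Longrightarrow> supp_ok n A \<and> supp_ok n B"
  by (auto simp: wterms_def supp_ok_def)

lemma finite_wterms: "finite (wterms n A B M)"
proof -
  define bd where "bd i = (if i < n then A i + B i + M else 0)" for i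
  let ?S = "{a. \<forall>i. a i \<le> bd i}"
  have "finite ?S"
    by (rule finite_bounded_funs, rule finite_subset[of _ "{..<n}"]) (auto simp: bd_def)
  then have "finite (?S \<times> ?S \<times> {..M} \<times> ?S \<times> ?S \<times> {..M} \<times> ?S)" by simp
  moreover have "wterms n A B M \<subseteq> ?S \<times> ?S \<times> {..M} \<times> ?S \<times> ?S \<times> {..M} \<times> ?S"
  proof
    fix t assume "t \<in> wterms n A B M"
    moreover obtain a b m c d p k where te: "t = (a, b, m, c, d, p, k)" by (cases t)
    ultimately have h: "supp_ok n a" "supp_ok n b" "supp_ok n c" "supp_ok n d" "supp_ok n k"
      "\<And>i. k i \<le> b i \<and> k i \<le> c i \<and> A i = a i + c i - k i \<and> B i = b i + d i - k i"
      "M = m + p + (\<Sum>i<n. k i)"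
      by (auto simp: wterms_def)
    have "a i \<le> bd i \<and> b i \<le> bd i \<and> c i \<le> bd i \<and> d i \<le> bd i \<and> k i \<le> bd i" for i
    proof (cases "i < n")
      case True
      then have "k i \<le> M" using member_le_sum[of i "{..<n}" k] h(7) by simp
      then show ?thesis using True h(6)[of i] unfolding bd_def by simp linarith
    qed (use h(1-5) in \<open>simp add: bd_def supp_ok_def\<close>)
    then show "t \<in> ?S \<times> ?S \<times> {..M} \<times> ?S \<times> ?S \<times> {..M} \<times> ?S"
      using h(7) by (auto simp: te)
  qed
  ultimately show ?thesis by (rule finite_subset[rotated])
qed

type_synonym wterm = "(nat \<Rightarrow> nat) \<times> (nat \<Rightarrow> nat) \<times> nat \<times> (nat \<Rightarrow> nat) \<times> (nat \<Rightarrow> nat) \<times> nat \<times> (nat \<Rightarrow> nat)"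

definition wterms_fixed :: "nat \<Rightarrow> (nat \<Rightarrow> nat) \<Rightarrow> (nat \<Rightarrow> nat) \<Rightarrow> nat \<Rightarrow> nat \<Rightarrow> nat \<Rightarrow> (nat \<Rightarrow> nat) \<Rightarrow> wterm set" where
  "wterms_fixed n A B M m0 p0 k0 = {(a, b, m, c, d, p, k). (a, b, m, c, d, p, k) \<in> wterms n A B M \<and>
      m = m0 \<and> p = p0 \<and> k = k0}"

lemma finite_wterms_fixed: "finite (wterms_fixed n A B M m0 p0 k0)"
  by (rule finite_subset[OF _ finite_wterms]) (auto simp: wterms_fixed_def)

lemma sum_wterms_fixed:
  assumes A: "supp_ok n A" and B: "supp_ok n B" and k0: "supp_ok n k0"
    and M: "M = m0 + p0 + (\<Sum>i<n. k0 i)"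
  shows "(\<Sum>(a, b, m, c, d, p, k)\<in>wterms_fixed n A B M m0 p0 k0. F a b m c d p k) =
    (\<Sum>(v, w)\<in>splits (A, B). F (fst v) (\<lambda>i. snd v i + k0 i) m0 (\<lambda>i. fst w i + k0 i) (snd w) p0 k0)"
proof -
  define to_splits :: "wterm \<Rightarrow> expo \<times> expo" where
    "to_splits = (\<lambda>(a, b, m, c, d, p, k). ((a, \<lambda>i. b i - k0 i), (\<lambda>i. c i - k0 i, d)))"
  define to_terms :: "expo \<times> expo \<Rightarrow> wterm" where
    "to_terms = (\<lambda>(v, w). (fst v, \<lambda>i. snd v i + k0 i, m0, \<lambda>i. fst w i + k0 i, snd w, p0, k0))"
  show ?thesis
  proof (rule sum.reindex_bij_witness[where j=to_splits and i=to_terms])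
    fix t assume "t \<in> wterms_fixed n A B M m0 p0 k0"
    then obtain a b c d where t: "t = (a, b, m0, c, d, p0, k0)"
      and le: "\<And>i. k0 i \<le> b i \<and> k0 i \<le> c i" and AB: "\<And>i. A i = a i + c i - k0 i \<and> B i = b i + d i - k0 i"
      by (auto simp: wterms_fixed_def wterms_def)
    have b: "(\<lambda>i. b i - k0 i + k0 i) = b" and c: "(\<lambda>i. c i - k0 i + k0 i) = c"
      using le by (simp_all add: fun_eq_iff)
    show "to_terms (to_splits t) = t" by (simp add: to_terms_def to_splits_def t b c)
    show "to_splits t \<in> splits (A, B)" using le AB by (simp add: to_splits_def t splits_iff)
    show "(case to_splits t of (v, w) \<Rightarrow> F (fst v) (\<lambda>i. snd v i + k0 i) m0 (\<lambda>i. fst w i + k0 i) (snd w) p0 k0) =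
        (case t of (a, b, m, c, d, p, k) \<Rightarrow> F a b m c d p k)"
      by (simp add: to_splits_def t b c)
  next
    fix q assume q: "q \<in> splits (A, B)"
    then obtain a b c d where qe: "q = ((a, b), (c, d))" and AB: "\<And>i. A i = a i + c i \<and> B i = b i + d i"
      by (cases q) (auto simp: splits_iff)
    show "to_splits (to_terms q) = q" by (simp add: to_terms_def to_splits_def qe)
    have "supp_ok n a \<and> supp_ok n b \<and> supp_ok n c \<and> supp_ok n d"
      using q supp_ok_splits_iff[of "(a, b)" "(c, d)" A B n] A B by (simp add: qe)
    then show "to_terms q \<in> wterms_fixed n A B M m0 p0 k0"
      using k0 AB M by (simp add: to_terms_def qe wterms_fixed_def wterms_def supp_ok_add)
  qed
qed

lemma wterms_zero: "wterms n A B 0 = wterms_fixed n A B 0 0 0 (\<lambda>_. 0)"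
proof (intro equalityI subsetI)
  fix t assume t: "t \<in> wterms n A B 0"
  obtain a b m c d p k where te: "t = (a, b, m, c, d, p, k)" by (cases t)
  from t have "supp_ok n k" "m = 0" "p = 0" "\<forall>i<n. k i = 0" by (auto simp: te wterms_def)
  then have "k = (\<lambda>_. 0)" "m = 0" "p = 0" by (auto simp: supp_ok_def fun_eq_iff not_less[symmetric])
  then show "t \<in> wterms_fixed n A B 0 0 0 (\<lambda>_. 0)" using t by (simp add: te wterms_fixed_def)
qed (auto simp: wterms_fixed_def)

lemma wterms_one: "wterms n A B 1 = (wterms_fixed n A B 1 1 0 (\<lambda>_. 0) \<union> wterms_fixed n A B 1 0 1 (\<lambda>_. 0)) \<union>
    (\<Union>i<n. wterms_fixed n A B 1 0 0 (unitv i))"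
proof (intro equalityI subsetI)
  fix t assume t: "t \<in> wterms n A B 1"
  obtain a b m c d p k where te: "t = (a, b, m, c, d, p, k)" by (cases t)
  from t have k: "supp_ok n k" and M: "1 = m + p + (\<Sum>i<n. k i)" by (auto simp: te wterms_def)
  show "t \<in> (wterms_fixed n A B 1 1 0 (\<lambda>_. 0) \<union> wterms_fixed n A B 1 0 1 (\<lambda>_. 0)) \<union>
      (\<Union>i<n. wterms_fixed n A B 1 0 0 (unitv i))"
  proof (cases "(\<Sum>i<n. k i) = 0")
    case True
    then have "k = (\<lambda>_. 0)" using k by (auto simp: supp_ok_def fun_eq_iff not_less[symmetric])
    moreover have "(m = 1 \<and> p = 0) \<or> (m = 0 \<and> p = 1)" using M True by auto
    ultimately show ?thesis using t by (auto simp: te wterms_fixed_def)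
  next
    case False
    then have "(\<Sum>i<n. k i) = 1" and mp: "m = 0" "p = 0" using M by linarith+
    then obtain i where "i < n" "k i = 1" "\<forall>j<n. j \<noteq> i \<longrightarrow> k j = 0"
      using sum_eq_1_iff[of "{..<n}" k] by auto
    then have "i < n" "k = unitv i"
      using k by (auto simp: unitv_def supp_ok_def fun_eq_iff not_less[symmetric])
    then show ?thesis using t mp by (auto simp: te wterms_fixed_def)
  qed
qed (auto simp: wterms_fixed_def)

lemma wcoeff_zero: "wcoeff n b c (\<lambda>_. 0) = 1"
  by (simp add: wcoeff_def)

lemma wcoeff_unitv: "i < n \<Longrightarrow> wcoeff n b c (unitv i) = - of_nat (b i * c i)"
proof -
  assume i: "i < n"
  have "(\<Prod>j<n. of_nat (fact (unitv i j) * (b j choose unitv i j) * (c j choose unitv i j)) :: 'a) =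
        (\<Prod>j<n. if j = i then of_nat (b i * c i) else 1)"
    by (rule prod.cong) (auto simp: unitv_def)
  also have "\<dots> = of_nat (b i * c i)" using i by (subst prod.delta) auto
  finally show ?thesis using i by (simp add: wcoeff_def unitv_def sum.delta)
qed

lemma wmult_eq: "wmult n f g (A, B, M) =
   (\<Sum>(a, b, m, c, d, p, k)\<in>wterms n A B M. wcoeff n b c k * f (a, b, m) * g (c, d, p))"
  by (simp add: wmult_def)

lemma wmult_eq_0_unless_supp_ok: "\<not> (supp_ok n A \<and> supp_ok n B) \<Longrightarrow> wmult n f g (A, B, M) = 0"
  unfolding wmult_eq by (rule sum.neutral) (auto dest: wterms_supp_ok)

lemma wmult_hbar_degree_zero:
  assumes "supp_ok n A" "supp_ok n B"
  shows "wmult n f g (A, B, 0) = (\<Sum>(v, w)\<in>splits (A, B). f (fst v, snd v, 0) * g (fst w, snd w, 0))"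
  unfolding wmult_eq wterms_zero
  using sum_wterms_fixed[OF assms supp_ok_zero, of 0 0 0 "\<lambda>a b m c d p k. wcoeff n b c k * f (a, b, m) * g (c, d, p)"]
  by (simp add: wcoeff_zero)

lemma sum_wterms_fixed_contraction:
  assumes A: "supp_ok n A" and B: "supp_ok n B" and i: "i < n"
  shows "(\<Sum>(a, b, m, c, d, p, k)\<in>wterms_fixed n A B 1 0 0 (unitv i). wcoeff n b c k * f (a, b, m) * g (c, d, p)) =
    - (\<Sum>(v, w)\<in>splits (A, B). of_nat ((snd v i + 1) * (fst w i + 1)) *
        f (fst v, \<lambda>j. snd v j + unitv i j, 0) * g (\<lambda>j. fst w j + unitv i j, snd w, 0))"
proof -
  have "(\<Sum>j<n. unitv i j) = 1" using i by (simp add: unitv_def sum.delta)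
  then have "(\<Sum>(a, b, m, c, d, p, k)\<in>wterms_fixed n A B 1 0 0 (unitv i). wcoeff n b c k * f (a, b, m) * g (c, d, p)) =
      (\<Sum>(v, w)\<in>splits (A, B). wcoeff n (\<lambda>j. snd v j + unitv i j) (\<lambda>j. fst w j + unitv i j) (unitv i) *
        f (fst v, \<lambda>j. snd v j + unitv i j, 0) * g (\<lambda>j. fst w j + unitv i j, snd w, 0))"
    using sum_wterms_fixed[OF A B supp_ok_unitv[OF i], of 1 0 0
        "\<lambda>a b m c d p k. wcoeff n b c k * f (a, b, m) * g (c, d, p)"] by simp
  also have "\<dots> = - (\<Sum>(v, w)\<in>splits (A, B). of_nat ((snd v i + 1) * (fst w i + 1)) *
      f (fst v, \<lambda>j. snd v j + unitv i j, 0) * g (\<lambda>j. fst w j + unitv i j, snd w, 0))"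
    unfolding sum_negf[symmetric] by (rule sum.cong) (auto simp: wcoeff_unitv[OF i] algebra_simps)
  finally show ?thesis .
qed

text \<open>The coefficient of \<open>\<hbar>\<close> in a product: the two ways of taking \<open>\<hbar>\<close> from a factor, and one
  contraction of a \<open>y\<^sub>i\<close> of the left factor with an \<open>x\<^sub>i\<close> of the right one.\<close>

lemma wmult_hbar_degree_one:
  assumes A: "supp_ok n A" and B: "supp_ok n B"
  shows "wmult n f g (A, B, 1) =
    (\<Sum>(v, w)\<in>splits (A, B). f (fst v, snd v, 1) * g (fst w, snd w, 0)) +
    (\<Sum>(v, w)\<in>splits (A, B). f (fst v, snd v, 0) * g (fst w, snd w, 1)) -
    (\<Sum>i<n. \<Sum>(v, w)\<in>splits (A, B). of_nat ((snd v i + 1) * (fst w i + 1)) *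
        f (fst v, \<lambda>j. snd v j + unitv i j, 0) * g (\<lambda>j. fst w j + unitv i j, snd w, 0))"
proof -
  let ?F = "\<lambda>(a, b, m, c, d, p, k). wcoeff n b c k * f (a, b, m) * g (c, d, p)"
  let ?P1 = "wterms_fixed n A B 1 1 0 (\<lambda>_. 0)" and ?P2 = "wterms_fixed n A B 1 0 1 (\<lambda>_. 0)"
  let ?U = "\<lambda>i. wterms_fixed n A B 1 0 0 (unitv i)"
  have unitv_nz: "unitv i \<noteq> (\<lambda>_. 0)" for i by (auto simp: unitv_def fun_eq_iff)
  have unitv_inj: "unitv i = unitv j \<Longrightarrow> i = j" for i j
    by (auto simp: unitv_def fun_eq_iff split: if_splits)
  have "?P1 \<inter> ?P2 = {}" "(?P1 \<union> ?P2) \<inter> (\<Union>i<n. ?U i) = {}"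
    using unitv_nz by (auto simp: wterms_fixed_def)
  then have "wmult n f g (A, B, 1) = sum ?F ?P1 + sum ?F ?P2 + sum ?F (\<Union>i<n. ?U i)"
    unfolding wmult_eq wterms_one by (simp add: sum.union_disjoint finite_wterms_fixed)
  also have "sum ?F (\<Union>i<n. ?U i) = (\<Sum>i<n. sum ?F (?U i))"
    using unitv_inj by (intro sum.UNION_disjoint) (auto simp: finite_wterms_fixed, auto simp: wterms_fixed_def)
  also have "sum ?F ?P1 = (\<Sum>(v, w)\<in>splits (A, B). f (fst v, snd v, 1) * g (fst w, snd w, 0))"
    using sum_wterms_fixed[OF A B supp_ok_zero, of 1 1 0 "\<lambda>a b m c d p k. wcoeff n b c k * f (a, b, m) * g (c, d, p)"]
    by (simp add: wcoeff_zero)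
  also have "sum ?F ?P2 = (\<Sum>(v, w)\<in>splits (A, B). f (fst v, snd v, 0) * g (fst w, snd w, 1))"
    using sum_wterms_fixed[OF A B supp_ok_zero, of 1 0 1 "\<lambda>a b m c d p k. wcoeff n b c k * f (a, b, m) * g (c, d, p)"]
    by (simp add: wcoeff_zero)
  also have "(\<Sum>i<n. sum ?F (?U i)) = (\<Sum>i<n. - (\<Sum>(v, w)\<in>splits (A, B). of_nat ((snd v i + 1) * (fst w i + 1)) *
        f (fst v, \<lambda>j. snd v j + unitv i j, 0) * g (\<lambda>j. fst w j + unitv i j, snd w, 0)))"
    by (rule sum.cong[OF refl], rule sum_wterms_fixed_contraction[OF A B]) simp
  finally show ?thesis by (simp add: sum_negf)
qed

definition hbar_div :: "'a ser \<Rightarrow> 'a ser" where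
  "hbar_div f = (\<lambda>(a, b, m). f (a, b, Suc m))"

lemma wmult_central_left:
  assumes f: "\<And>t. t \<noteq> (\<lambda>_. 0, \<lambda>_. 0, r) \<Longrightarrow> f t = 0" and A: "supp_ok n A" and B: "supp_ok n B"
  shows "wmult n f g (A, B, M) = (if r \<le> M then f (\<lambda>_. 0, \<lambda>_. 0, r) * g (A, B, M - r) else 0)"
proof -
  let ?t0 = "(\<lambda>_. 0, \<lambda>_. 0, r, A, B, M - r, \<lambda>_. 0) :: wterm"
  let ?F = "\<lambda>(a, b, m, c, d, p, k). wcoeff n b c k * f (a, b, m) * g (c, d, p)"
  have "wmult n f g (A, B, M) = (if ?t0 \<in> wterms n A B M then ?F ?t0 else 0)"
    unfolding wmult_eq
  proof (rule sum_eq_single[OF finite_wterms])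
    fix t assume t: "t \<in> wterms n A B M" and ne: "t \<noteq> ?t0"
    obtain a b m c d p k where t_eq: "t = (a, b, m, c, d, p, k)" by (cases t)
    show "?F t = 0"
    proof (cases "(a, b, m) = (\<lambda>_. 0, \<lambda>_. 0, r)")
      case True
      with t have "k = (\<lambda>_. 0)" "c = A" "d = B" "p = M - r" by (auto simp: t_eq wterms_def fun_eq_iff)
      with True ne show ?thesis by (simp add: t_eq)
    qed (simp add: t_eq f)
  qed
  then show ?thesis using A B by (simp add: wterms_def wcoeff_zero)
qed

lemma wmult_central_right:
  assumes g: "\<And>t. t \<noteq> (\<lambda>_. 0, \<lambda>_. 0, r) \<Longrightarrow> g t = 0" and A: "supp_ok n A" and B: "supp_ok n B"
  shows "wmult n f g (A, B, M) = (if r \<le> M then f (A, B, M - r) * g (\<lambda>_. 0, \<lambda>_. 0, r) else 0)"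
proof -
  let ?t0 = "(A, B, M - r, \<lambda>_. 0, \<lambda>_. 0, r, \<lambda>_. 0) :: wterm"
  let ?F = "\<lambda>(a, b, m, c, d, p, k). wcoeff n b c k * f (a, b, m) * g (c, d, p)"
  have "wmult n f g (A, B, M) = (if ?t0 \<in> wterms n A B M then ?F ?t0 else 0)"
    unfolding wmult_eq
  proof (rule sum_eq_single[OF finite_wterms])
    fix t assume t: "t \<in> wterms n A B M" and ne: "t \<noteq> ?t0"
    obtain a b m c d p k where t_eq: "t = (a, b, m, c, d, p, k)" by (cases t)
    show "?F t = 0"
    proof (cases "(c, d, p) = (\<lambda>_. 0, \<lambda>_. 0, r)")
      case True
      with t have "k = (\<lambda>_. 0)" "a = A" "b = B" "m = M - r" by (auto simp: t_eq wterms_def fun_eq_iff)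
      with True ne show ?thesis by (simp add: t_eq)
    qed (simp add: t_eq g)
  qed
  then show ?thesis using A B by (simp add: wterms_def wcoeff_zero)
qed

lemma wmult_hbar:
  "wmult n hbar h (A, B, M) = (if supp_ok n A \<and> supp_ok n B \<and> M \<ge> 1 then h (A, B, M - 1) else 0)"
proof (cases "supp_ok n A \<and> supp_ok n B")
  case True
  then show ?thesis using wmult_central_left[where f=hbar and r=1 and g=h] by (simp add: hbar_def)
qed (auto simp: wmult_eq_0_unless_supp_ok)

lemma wmult_constc_left:
  assumes "f \<in> Dc n" shows "wmult n (constc c) f = (\<lambda>t. c * f t)"
proof
  fix t :: mono
  obtain A B M where t: "t = (A, B, M)" by (cases t)
  show "wmult n (constc c) f t = c * f t"
    using wmult_central_left[where f="constc c" and r=0 and g=f and A=A and B=B and M=M] assms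
    by (cases "supp_ok n A \<and> supp_ok n B") (auto simp: t constc_def Dc_def wmult_eq_0_unless_supp_ok)
qed

lemma wmult_constc_right:
  assumes "f \<in> Dc n" shows "wmult n f (constc c) = (\<lambda>t. f t * c)"
proof
  fix t :: mono
  obtain A B M where t: "t = (A, B, M)" by (cases t)
  show "wmult n f (constc c) t = f t * c"
    using wmult_central_right[where g="constc c" and r=0 and f=f and A=A and B=B and M=M] assms
    by (cases "supp_ok n A \<and> supp_ok n B") (auto simp: t constc_def Dc_def wmult_eq_0_unless_supp_ok)
qed

lemma wmult_add_left: "wmult n (\<lambda>t. f t + g t) h = (\<lambda>t. wmult n f h t + wmult n g h t)"
  by (auto simp: wmult_def sum.distrib[symmetric] algebra_simps case_prod_beta intro!: sum.cong)

lemma wmult_add_right: "wmult n h (\<lambda>t. f t + g t) = (\<lambda>t. wmult n h f t + wmult n h g t)"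
  by (auto simp: wmult_def sum.distrib[symmetric] algebra_simps case_prod_beta intro!: sum.cong)

lemma wmult_in_Dc: "wmult n f g \<in> Dc n"
  by (simp add: Dc_def wmult_eq_0_unless_supp_ok)

lemma Dc_add: "f \<in> Dc n \<Longrightarrow> g \<in> Dc n \<Longrightarrow> (\<lambda>t. f t + g t) \<in> Dc n"
  by (simp add: Dc_def)

lemma Dc_diff: "f \<in> Dc n \<Longrightarrow> g \<in> Dc n \<Longrightarrow> (\<lambda>t. f t - g t) \<in> Dc n"
  by (simp add: Dc_def)

lemma Dc_sum: "(\<And>i. i \<in> A \<Longrightarrow> F i \<in> Dc n) \<Longrightarrow> (\<lambda>t. \<Sum>i\<in>A. F i t) \<in> Dc n"
  by (simp add: Dc_def)

lemma Dc_constc: "constc c \<in> Dc n"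
  by (auto simp: Dc_def constc_def)

lemma Dc_vemb: "vemb n v \<in> Dc n"
proof -
  have "vemb n v (a, b, m) = 0" if ns: "\<not> (supp_ok n a \<and> supp_ok n b)" for a b m
    unfolding vemb_def
  proof (rule sum.neutral, rule ballI)
    fix i assume "i \<in> {..<n}"
    then have "(a, b, m) \<noteq> (unitv i, \<lambda>_. 0, 0)" "(a, b, m) \<noteq> (\<lambda>_. 0, unitv i, 0)"
      using ns supp_ok_unitv[of i n] by (auto simp: supp_ok_def)
    then show "(if (a, b, m) = (unitv i, \<lambda>_. 0, 0) then v i else 0) +
        (if (a, b, m) = (\<lambda>_. 0, unitv i, 0) then v (n + i) else 0) = 0"
      by (simp only: if_False add_0 simp_thms)
  qed
  then show ?thesis unfolding Dc_def by blast
qed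

lemma hbar_div_in_Dc: "f \<in> Dc n \<Longrightarrow> hbar_div f \<in> Dc n"
  by (simp add: Dc_def hbar_div_def)

lemma hbar_div_hbar_mult: "c \<in> Dc n \<Longrightarrow> hbar_div (wmult n hbar c) = c"
  by (auto simp: hbar_div_def wmult_hbar Dc_def)

section \<open>The classical limit\<close>

text \<open>The map \<open>D \<rightarrow> D/\<hbar>D = A\<close>: the coefficients of \<open>\<hbar>\<^sup>0\<close>, read as a commutative power series.\<close>

lift_definition classical :: "nat \<Rightarrow> 'a::comm_ring_1 ser \<Rightarrow> 'a mps" is
  "\<lambda>n f u. if supp_ok n (fst u) \<and> supp_ok n (snd u) then f (fst u, snd u, 0) else 0"
  using finite_expo_supp_ok by fastforce

lemma mcoeff_classical: "mcoeff (classical n f) (a, b) = (if supp_ok n a \<and> supp_ok n b then f (a, b, 0) else 0)"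
  by (simp add: classical.rep_eq)

lemma mcoeff_classical_mult:
  assumes "supp_ok n A" "supp_ok n B"
  shows "mcoeff (classical n f * classical n g) (A, B) =
    (\<Sum>(v, w)\<in>splits (A, B). f (fst v, snd v, 0) * g (fst w, snd w, 0))"
  using assms supp_ok_splits_iff[of _ _ A B n]
  by (auto simp: mcoeff_mult finite_expo_supp_ok mcoeff_classical intro!: sum.cong)

lemma classical_wmult: "classical n (wmult n f g) = classical n f * classical n g"
proof (rule mps_eqI)
  fix u :: expo assume u: "finite_expo u"
  obtain A B where u_eq: "u = (A, B)" by (cases u)
  show "mcoeff (classical n (wmult n f g)) u = mcoeff (classical n f * classical n g) u"
  proof (cases "supp_ok n A \<and> supp_ok n B")
    case True
    then show ?thesis by (simp add: u_eq mcoeff_classical mcoeff_classical_mult wmult_hbar_degree_zero)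
  next
    case False
    then have "mcoeff (classical n f * classical n g) u = 0"
      using u supp_ok_splits_iff[of _ _ A B n]
      by (auto simp: u_eq mcoeff_mult mcoeff_classical intro!: sum.neutral)
    then show ?thesis using False by (auto simp: u_eq mcoeff_classical)
  qed
qed

lemma wmult_comm_hbar_degree_zero: "wmult n f g (A, B, 0) = wmult n g f (A, B, 0)"
proof (cases "supp_ok n A \<and> supp_ok n B")
  case True
  have "mcoeff (classical n (wmult n f g)) (A, B) = mcoeff (classical n (wmult n g f)) (A, B)"
    by (simp add: classical_wmult mult.commute)
  then show ?thesis using True by (simp add: mcoeff_classical)
qed (simp add: wmult_eq_0_unless_supp_ok)

lemma mcoeff_mderiv_classical_mult:
  assumes A: "supp_ok n A" and B: "supp_ok n B" and i: "i < n"
  shows "mcoeff (mderiv (i, True) (classical n f) * mderiv (i, False) (classical n g)) (A, B) =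
    (\<Sum>(v, w)\<in>splits (A, B). of_nat ((snd v i + 1) * (fst w i + 1)) *
        f (fst v, \<lambda>j. snd v j + unitv i j, 0) * g (\<lambda>j. fst w j + unitv i j, snd w, 0))"
  unfolding mcoeff_mult[OF finite_expo_supp_ok[OF A B]]
proof (rule sum.cong[OF refl], clarify)
  fix a b c d assume "((a, b), (c, d)) \<in> splits (A, B)"
  then have "supp_ok n a" "supp_ok n b" "supp_ok n c" "supp_ok n d"
    using supp_ok_splits_iff[of "(a, b)" "(c, d)" A B n] A B by auto
  then show "mcoeff (mderiv (i, True) (classical n f)) (a, b) * mcoeff (mderiv (i, False) (classical n g)) (c, d) =
      of_nat ((snd (a, b) i + 1) * (fst (c, d) i + 1)) *
        f (fst (a, b), \<lambda>j. snd (a, b) j + unitv i j, 0) * g (\<lambda>j. fst (c, d) j + unitv i j, snd (c, d), 0)"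
    using supp_ok_unitv[OF i]
    by (simp add: mderiv.rep_eq var_unit_def var_exp_def mcoeff_classical supp_ok_add plus_fun_def
        algebra_simps)
qed

lemma wmult_hbar_degree_one_classical:
  assumes A: "supp_ok n A" and B: "supp_ok n B"
  shows "wmult n f g (A, B, 1) = mcoeff (classical n (hbar_div f) * classical n g +
    classical n f * classical n (hbar_div g) -
    (\<Sum>i<n. mderiv (i, True) (classical n f) * mderiv (i, False) (classical n g))) (A, B)"
  unfolding wmult_hbar_degree_one[OF A B]
  by (simp add: mcoeff_add mcoeff_diff mcoeff_sum mcoeff_classical_mult[OF A B] hbar_div_def
      mcoeff_mderiv_classical_mult[OF A B] case_prod_beta)

lemma wmult_comm_hbar_degree_one:
  assumes "supp_ok n A" "supp_ok n B"
  shows "wmult n f g (A, B, 1) - wmult n g f (A, B, 1) = mcoeff (poisson n (classical n f) (classical n g)) (A, B)"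
  unfolding wmult_hbar_degree_one_classical[OF assms] mcoeff_diff[symmetric] poisson_def
  by (rule arg_cong[where f="\<lambda>P. mcoeff P (A, B)"])
     (simp add: algebra_simps sum_subtractf[symmetric] mult.commute)

lemma hbar_mult_hbar_div:
  assumes "f \<in> Dc n" and "classical n f = 0"
  shows "wmult n hbar (hbar_div f) = f"
proof
  fix t :: mono
  obtain A B M where t: "t = (A, B, M)" by (cases t)
  have "f (A, B, 0) = 0" if "supp_ok n A \<and> supp_ok n B"
    using arg_cong[OF assms(2), of "\<lambda>P. mcoeff P (A, B)"] that by (simp add: mcoeff_classical mcoeff_zero)
  then show "wmult n hbar (hbar_div f) t = f t"
    using assms(1) by (cases M) (auto simp: t wmult_hbar hbar_div_def Dc_def)
qed

lemma classical_add: "classical n (\<lambda>t. f t + g t) = classical n f + classical n g"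
  by (rule mps_eqI) (simp add: classical.rep_eq mcoeff_add)

lemma classical_diff: "classical n (\<lambda>t. f t - g t) = classical n f - classical n g"
  by (rule mps_eqI) (simp add: classical.rep_eq mcoeff_diff)

lemma classical_sum: "classical n (\<lambda>t. \<Sum>i\<in>A. F i t) = (\<Sum>i\<in>A. classical n (F i))"
  by (rule mps_eqI) (auto simp: classical.rep_eq mcoeff_sum)

lemma classical_hbar_mult: "classical n (wmult n hbar h) = 0"
  by (rule mps_eqI) (simp add: classical.rep_eq mcoeff_zero wmult_hbar)

lemma classical_constc: "classical n (constc c) = mconst c"
  by (rule mps_eqI) (auto simp: classical.rep_eq mconst.rep_eq constc_def zero_prod_def zero_fun_def)

lemma classical_vemb: "classical n (vemb n v) = mps_of_vec n v"
proof (rule mps_eqI)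
  fix u :: expo
  obtain a b where u: "u = (a, b)" by (cases u)
  have "mcoeff (mps_of_vec n v) u = (\<Sum>i<n. (if u = var_unit (i, False) then v i else 0) +
      (if u = var_unit (i, True) then v (n + i) else 0))"
    by (auto simp: mps_of_vec_def mcoeff_sum mcoeff_add mcoeff_mconst_mult mvar.rep_eq intro!: sum.cong)
  also have "\<dots> = vemb n v (a, b, 0)"
    by (simp add: u vemb_def var_unit_def zero_fun_def)
  also have "\<dots> = mcoeff (classical n (vemb n v)) u"
    using Dc_vemb[of n v] by (auto simp: u mcoeff_classical Dc_def)
  finally show "mcoeff (classical n (vemb n v)) u = mcoeff (mps_of_vec n v) u" ..
qed

lemma mps_supported_classical: "mps_supported n (classical n f)"
  by (auto simp: mps_supported_def classical.rep_eq split: if_splits)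

lemma commutator_hbar_div:
  "wmult n hbar (hbar_div (\<lambda>t. wmult n f g t - wmult n g f t)) = (\<lambda>t. wmult n f g t - wmult n g f t)"
  by (rule hbar_mult_hbar_div)
     (auto intro!: Dc_diff wmult_in_Dc mps_eqI
       simp: classical.rep_eq mcoeff_zero wmult_comm_hbar_degree_zero)

lemma classical_commutator_hbar_div:
  "classical n (hbar_div (\<lambda>t. wmult n f g t - wmult n g f t)) = poisson n (classical n f) (classical n g)"
proof (rule mps_eqI)
  fix u :: expo
  obtain A B where u: "u = (A, B)" by (cases u)
  have "mcoeff (poisson n (classical n f) (classical n g)) (A, B) = 0" if "\<not> (supp_ok n A \<and> supp_ok n B)"
    using mps_supported_poisson[OF mps_supported_classical mps_supported_classical, of n f g] that
    unfolding mps_supported_def by auto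
  then show "mcoeff (classical n (hbar_div (\<lambda>t. wmult n f g t - wmult n g f t))) u =
      mcoeff (poisson n (classical n f) (classical n g)) u"
    using wmult_comm_hbar_degree_one[of n A B f g] by (auto simp: u mcoeff_classical hbar_div_def)
qed

section \<open>The ideal \<open>J\<close> and its normalizer\<close>

definition series_of :: "nat \<Rightarrow> 'a::comm_ring_1 mps \<Rightarrow> 'a ser" where
  "series_of n q = (\<lambda>(a, b, m). if m = 0 \<and> supp_ok n a \<and> supp_ok n b then mcoeff q (a, b) else 0)"

lemma series_of_in_Dc: "series_of n q \<in> Dc n"
  by (auto simp: Dc_def series_of_def)

lemma mcoeff_mps_of_vec_mult_classical_series_of:
  assumes "supp_ok n A" "supp_ok n B"
  shows "mcoeff (mps_of_vec n l * classical n (series_of n q)) (A, B) = mcoeff (mps_of_vec n l * q) (A, B)"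
proof -
  have coeff: "mcoeff (classical n (series_of n q)) ((A, B) - var_unit k) = mcoeff q ((A, B) - var_unit k)" for k
    using supp_ok_le[OF assms(1), of "\<lambda>j. A j - fst (var_unit k) j"]
      supp_ok_le[OF assms(2), of "\<lambda>j. B j - snd (var_unit k) j"]
    by (simp add: classical.rep_eq series_of_def fun_diff_def minus_prod_def)
  show ?thesis unfolding mcoeff_mps_of_vec_mult coeff ..
qed

lemma classical_lift_lin_ideal:
  assumes "P \<in> lin_ideal n L" and "mps_supported n P"
  obtains ls gs where "length gs = length ls" "set ls \<subseteq> L" "set gs \<subseteq> Dc n"
    and "classical n (\<lambda>t. \<Sum>i<length ls. wmult n (vemb n (ls ! i)) (gs ! i) t) = P"
proof -
  obtain ls qs where qs: "length qs = length ls" "set ls \<subseteq> L"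
    and P: "P = (\<Sum>i<length ls. mps_of_vec n (ls ! i) * qs ! i)"
    using lin_ideal_sum_list[OF assms(1)] by blast
  let ?gs = "map (series_of n) qs"
  let ?S = "\<lambda>t. \<Sum>i<length ls. wmult n (vemb n (ls ! i)) (?gs ! i) t"
  have "classical n ?S = P"
  proof (rule mps_eqI)
    fix u :: expo
    obtain A B where u: "u = (A, B)" by (cases u)
    have "mcoeff (classical n ?S) (A, B) = mcoeff P (A, B)" if "supp_ok n A" "supp_ok n B"
      using that qs(1)
      by (simp add: P classical_sum mcoeff_sum classical_wmult classical_vemb
          mcoeff_mps_of_vec_mult_classical_series_of)
    then show "mcoeff (classical n ?S) u = mcoeff P u"
      using assms(2) by (auto simp: u mcoeff_classical mps_supported_def)
  qed
  then show ?thesis using qs by (intro that[of ?gs ls]) (auto simp: series_of_in_Dc)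
qed

lemma Jideal_iff:
  fixes L :: "(nat \<Rightarrow> 'a::field_char_0) set"
  shows "j \<in> Jideal n L \<longleftrightarrow> j \<in> Dc n \<and> classical n j \<in> lin_ideal n L"
proof
  assume "j \<in> Jideal n L"
  then obtain ls gs h where "j \<in> Dc n" "set ls \<subseteq> L"
    and j: "j = (\<lambda>t. (\<Sum>i<length ls. wmult n (vemb n (ls ! i)) (gs ! i) t) + wmult n hbar h t)"
    unfolding Jideal_def by blast
  moreover have "classical n j = (\<Sum>i<length ls. mps_of_vec n (ls ! i) * classical n (gs ! i))"
    unfolding j classical_add classical_sum classical_hbar_mult by (simp add: classical_wmult classical_vemb)
  ultimately show "j \<in> Dc n \<and> classical n j \<in> lin_ideal n L"
    by (auto intro!: lin_ideal_sum lin_ideal.gen)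
next
  assume "j \<in> Dc n \<and> classical n j \<in> lin_ideal n L"
  then have j: "j \<in> Dc n" and cl_j: "classical n j \<in> lin_ideal n L" by auto
  obtain ls gs where gs: "length gs = length ls" "set ls \<subseteq> L" "set gs \<subseteq> Dc n"
    and S: "classical n (\<lambda>t. \<Sum>i<length ls. wmult n (vemb n (ls ! i)) (gs ! i) t) = classical n j"
    by (rule classical_lift_lin_ideal[OF cl_j mps_supported_classical])
  define R where "R = (\<lambda>t. j t - (\<Sum>i<length ls. wmult n (vemb n (ls ! i)) (gs ! i) t))"
  have R: "R \<in> Dc n" unfolding R_def by (intro Dc_diff Dc_sum wmult_in_Dc j)
  moreover have "classical n R = 0" by (simp add: R_def classical_diff S)
  ultimately have "j = (\<lambda>t. (\<Sum>i<length ls. wmult n (vemb n (ls ! i)) (gs ! i) t) + wmult n hbar (hbar_div R) t)"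
    by (simp add: hbar_mult_hbar_div R_def)
  then show "j \<in> Jideal n L"
    unfolding Jideal_def using j gs hbar_div_in_Dc[OF R]
    by (intro CollectI conjI exI[of _ ls] exI[of _ gs] exI[of _ "hbar_div R"]) simp_all
qed

lemma commutator_Jideal:
  fixes L :: "(nat \<Rightarrow> 'a::field_char_0) set"
  assumes lag: "lagrangian n L" and j: "j \<in> Jideal n L" and b: "b \<in> Jideal n L"
  shows "\<exists>c\<in>Jideal n L. wmult n hbar c = (\<lambda>t. wmult n j b t - wmult n b j t)"
proof (intro bexI)
  show "wmult n hbar (hbar_div (\<lambda>t. wmult n j b t - wmult n b j t)) = (\<lambda>t. wmult n j b t - wmult n b j t)"
    by (rule commutator_hbar_div)
  have "poisson n (classical n j) (classical n b) \<in> lin_ideal n L"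
    using j b lagrangian_isotropic[OF lag] by (intro poisson_lin_ideal) (auto simp: Jideal_iff)
  then show "hbar_div (\<lambda>t. wmult n j b t - wmult n b j t) \<in> Jideal n L"
    by (simp add: Jideal_iff classical_commutator_hbar_div hbar_div_in_Dc Dc_diff wmult_in_Dc)
qed

lemma commutator_add_constc:
  assumes "b \<in> Dc n"
  shows "(\<lambda>t. wmult n (\<lambda>t. a t + constc c t) b t - wmult n b (\<lambda>t. a t + constc c t) t) =
    (\<lambda>t. wmult n a b t - wmult n b a t)"
  by (simp add: wmult_add_left wmult_add_right wmult_constc_left[OF assms] wmult_constc_right[OF assms]
      mult.commute)

text \<open>The Poisson brackets of the classical limit of \<open>a\<close> with the generators \<open>l \<in> L\<close> of \<open>J\<close>
  lie in the classical ideal, so \<open>sub_const_lin_ideal\<close> applies.\<close>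

lemma normalizes_Jideal_imp:
  fixes L :: "(nat \<Rightarrow> 'a::field_char_0) set"
  assumes lag: "lagrangian n L" and a: "a \<in> Dc n" and nm: "normalizes n (Jideal n L) a"
  shows "(\<lambda>t. a t + constc (- a (\<lambda>_. 0, \<lambda>_. 0, 0)) t) \<in> Jideal n L"
proof -
  have "poisson n (classical n a) (mps_of_vec n l) \<in> lin_ideal n L" if l: "l \<in> L" for l
  proof -
    have "vemb n l \<in> Jideal n L"
      unfolding Jideal_iff classical_vemb using Dc_vemb lin_ideal.gen[OF l, of n 1] by simp
    then obtain c where c: "c \<in> Jideal n L"
      and hc: "wmult n hbar c = (\<lambda>t. wmult n a (vemb n l) t - wmult n (vemb n l) a t)"
      using nm unfolding normalizes_def by blast
    have "c = hbar_div (\<lambda>t. wmult n a (vemb n l) t - wmult n (vemb n l) a t)"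
      using c by (simp flip: hc add: hbar_div_hbar_mult Jideal_iff)
    then have "classical n c = poisson n (classical n a) (mps_of_vec n l)"
      by (simp add: classical_commutator_hbar_div classical_vemb)
    then show ?thesis using c by (simp add: Jideal_iff)
  qed
  then have "classical n a - mconst (mcoeff (classical n a) 0) \<in> lin_ideal n L"
    by (intro sub_const_lin_ideal[OF lag mps_supported_classical])
  moreover have "mcoeff (classical n a) 0 = a (\<lambda>_. 0, \<lambda>_. 0, 0)"
    by (simp add: classical.rep_eq zero_prod_def zero_fun_def)
  ultimately show ?thesis
    using a by (simp add: Jideal_iff classical_add classical_constc Dc_add Dc_constc mconst_minus)
qed

lemma Jideal_const_coeff: "j \<in> Jideal n L \<Longrightarrow> j (\<lambda>_. 0, \<lambda>_. 0, 0) = 0"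
  using mcoeff_zero_lin_ideal[of "classical n j" n L]
  by (simp add: Jideal_iff classical.rep_eq zero_prod_def zero_fun_def)

lemma gcls_iff: "x \<in> gcls n a \<longleftrightarrow> (\<exists>c. x = (\<lambda>t. a t + constc c t))"
  by (auto simp: gcls_def)

lemma gcls_add_constc: "gcls n (\<lambda>t. a t + constc c t) = gcls n a"
proof -
  have "(\<lambda>t. a t + constc c t + constc c' t) = (\<lambda>t. a t + constc (c + c') t)" for c'
    by (auto simp: constc_def)
  moreover have "(\<lambda>t. a t + constc c' t) = (\<lambda>t. a t + constc c t + constc (c' - c) t)" for c'
    by (auto simp: constc_def)
  ultimately show ?thesis unfolding gcls_def by blast
qed

lemma self_in_gcls: "a \<in> gcls n a"
  unfolding gcls_iff by (intro exI[of _ 0]) (simp add: constc_def)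

lemma inj_on_gcls_Jideal: "inj_on (gcls n) (Jideal n L)"
proof (rule inj_onI)
  fix j j' assume j: "j \<in> Jideal n L" and j': "j' \<in> Jideal n L" and "gcls n j = gcls n j'"
  then have "j \<in> gcls n j'" using self_in_gcls[of j n] by simp
  then obtain c where c: "j = (\<lambda>t. j' t + constc c t)" by (auto simp: gcls_iff)
  then have "c = 0" using Jideal_const_coeff[OF j] Jideal_const_coeff[OF j'] by (simp add: constc_def)
  then show "j = j'" using c by (simp add: constc_def)
qed

lemma normalizes_Jideal_add_constc:
  fixes L :: "(nat \<Rightarrow> 'a::field_char_0) set"
  assumes "lagrangian n L" and j: "j \<in> Jideal n L"
  shows "normalizes n (Jideal n L) (\<lambda>t. j t + constc c t)"
  unfolding normalizes_def
proof
  fix b assume b: "b \<in> Jideal n L"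
  then have "b \<in> Dc n" by (simp add: Jideal_iff)
  then show "\<exists>c'\<in>Jideal n L. wmult n hbar c' =
      (\<lambda>t. wmult n (\<lambda>t. j t + constc c t) b t - wmult n b (\<lambda>t. j t + constc c t) t)"
    using commutator_Jideal[OF assms b] by (simp add: commutator_add_constc)
qed

theorem lemma3p1:
  fixes n :: nat and L :: "(nat \<Rightarrow> 'k::field_char_0) set"
  assumes "lagrangian n L"
  shows "inj_on (gcls n) (Jideal n L) \<and> gcls n ` Jideal n L = GJ n L"
proof (intro conjI inj_on_gcls_Jideal equalityI subsetI)
  fix X assume "X \<in> gcls n ` Jideal n L"
  then obtain j where j: "j \<in> Jideal n L" and X: "X = gcls n j" by blast
  then show "X \<in> GJ n L"
    using normalizes_Jideal_add_constc[OF assms j] by (auto simp: GJ_def Gset_def gcls_iff Jideal_iff)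
next
  fix X assume "X \<in> GJ n L"
  then obtain a where a: "a \<in> Dc n" and X: "X = gcls n a"
    and "\<forall>a'\<in>X. normalizes n (Jideal n L) a'" by (auto simp: GJ_def Gset_def)
  then have "normalizes n (Jideal n L) a" using self_in_gcls by blast
  then have "(\<lambda>t. a t + constc (- a (\<lambda>_. 0, \<lambda>_. 0, 0)) t) \<in> Jideal n L"
    by (rule normalizes_Jideal_imp[OF assms a])
  moreover have "X = gcls n (\<lambda>t. a t + constc (- a (\<lambda>_. 0, \<lambda>_. 0, 0)) t)"
    by (simp add: X gcls_add_constc)
  ultimately show "X \<in> gcls n ` Jideal n L" by blast
qed

end
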